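(* Let $T$ be a tree on $n\ge 4$ vertices. Then \[\left\lceil\frac{n+1}{3}\right\rceil \le f(T)\le \left\lfloor\frac{2(n-1)}{3}\right\rfloor.\] Furthermore, these bounds are best possible: there are infinitely many trees attaining the lower bound with equality, and infinitely many trees attaining the upper bound with equality.
   Context: For a graph $G$, a family $\mathcal{P}$ of subsets of $E(G)$ is a separating path system of $G$ if every member of $\mathcal{P}$ is (the edge set of) a path in $G$, and for every pair of distinct edges $e,e'\in E(G)$ there is some $P\in\mathcal{P}$ containing exactly one of $e,e'$. $f(G)$ denotes the minimum size of a separating path system of $G$. *)

theory Defs
  imports Complex_Main
begin

definition simple_graph :: "'a set \<Rightarrow> 'a set set \<Rightarrow> bool" where
  "simple_graph V E \<longleftrightarrow> finite V \<and>
     (\<forall>e\<in>E. \<exists>u v. e = {u, v} \<and> u \<noteq> v \<and> u \<in> V \<and> v \<in> V)"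

definition is_walk :: "'a set \<Rightarrow> 'a set set \<Rightarrow> 'a list \<Rightarrow> bool" where
  "is_walk V E vs \<longleftrightarrow> vs \<noteq> [] \<and> set vs \<subseteq> V \<and>
     (\<forall>i. Suc i < length vs \<longrightarrow> {vs ! i, vs ! Suc i} \<in> E)"

definition is_vpath :: "'a set \<Rightarrow> 'a set set \<Rightarrow> 'a list \<Rightarrow> bool" where
  "is_vpath V E vs \<longleftrightarrow> is_walk V E vs \<and> distinct vs"

definition path_edges :: "'a list \<Rightarrow> 'a set set" where
  "path_edges vs = {{vs ! i, vs ! Suc i} | i. Suc i < length vs}"

definition connected_graph :: "'a set \<Rightarrow> 'a set set \<Rightarrow> bool" where
  "connected_graph V E \<longleftrightarrow> V \<noteq> {} \<and>
     (\<forall>u\<in>V. \<forall>v\<in>V. \<exists>vs. is_vpath V E vs \<and> hd vs = u \<and> last vs = v)"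

definition has_cycle :: "'a set \<Rightarrow> 'a set set \<Rightarrow> bool" where
  "has_cycle V E \<longleftrightarrow> (\<exists>vs. is_vpath V E vs \<and> length vs \<ge> 3 \<and> {last vs, hd vs} \<in> E)"

definition is_tree :: "'a set \<Rightarrow> 'a set set \<Rightarrow> bool" where
  "is_tree V E \<longleftrightarrow> simple_graph V E \<and> connected_graph V E \<and> \<not> has_cycle V E"

definition is_path_edge_set :: "'a set \<Rightarrow> 'a set set \<Rightarrow> 'a set set \<Rightarrow> bool" where
  "is_path_edge_set V E P \<longleftrightarrow> (\<exists>vs. is_vpath V E vs \<and> P = path_edges vs)"

definition separating_path_system :: "'a set \<Rightarrow> 'a set set \<Rightarrow> 'a set set set \<Rightarrow> bool" where
  "separating_path_system V E \<P> \<longleftrightarrow> (\<forall>P\<in>\<P>. is_path_edge_set V E P) \<and>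
     (\<forall>e\<in>E. \<forall>e'\<in>E. e \<noteq> e' \<longrightarrow> (\<exists>P\<in>\<P>. (e \<in> P) \<noteq> (e' \<in> P)))"

definition f_sep :: "'a set \<Rightarrow> 'a set set \<Rightarrow> nat" where
  "f_sep V E = (LEAST k. \<exists>\<P>. finite \<P> \<and> card \<P> = k \<and> separating_path_system V E \<P>)"

end

theory Submission
  imports Defs
begin

text \<open>
  Upper bound. Peel three leaves off the tree one after another, with pendant edges a, b, c.
  By induction the remaining tree has a system of 2q paths that covers and separates its 3q
  edges, and it extends by a path through a and b and a path through c and exactly one of
  a and b. One or two further edges cost at most one more path, as a single edge may stay on
  no path at all.

  Lower bound. The sum of 3 - deg v over the n vertices of a tree is n + 2. A vertex of degree 2
  is an end of a path separating its two edges, and a leaf is an end of two paths unless its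
  edge lies on exactly one path, which then identifies the edge. As every path has two ends,
  n + 2 \<le> 2|P| + |P|, up to a loss of one when some leaf edge lies on no path.

  Stars attain the upper bound, since their paths have at most two edges; a caterpillar with an
  explicit system of (n + 1)/3 paths attains the lower bound.
\<close>

section \<open>Paths as vertex lists\<close>

lemma path_edges_conv_zip: "path_edges vs = (\<lambda>(u, v). {u, v}) ` set (zip vs (tl vs))"
  unfolding path_edges_def set_zip by (force simp: nth_tl)

lemma path_edges_Nil [simp]: "path_edges [] = {}"
  and path_edges_singleton [simp]: "path_edges [a] = {}"
  and path_edges_Cons_Cons [simp]: "path_edges (a # b # vs) = insert {a, b} (path_edges (b # vs))"
  by (simp_all add: path_edges_conv_zip)

lemma path_edges_Cons: "vs \<noteq> [] \<Longrightarrow> path_edges (a # vs) = insert {a, hd vs} (path_edges vs)"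
  by (cases vs) auto

lemma path_edges_append:
  "xs \<noteq> [] \<Longrightarrow> ys \<noteq> [] \<Longrightarrow> path_edges (xs @ ys) = insert {last xs, hd ys} (path_edges xs \<union> path_edges ys)"
  by (induction xs rule: list_nonempty_induct) (auto simp: path_edges_Cons)

lemma finite_path_edges [simp]: "finite (path_edges vs)"
  by (simp add: path_edges_conv_zip)

lemma card_path_edges_le: "card (path_edges vs) \<le> length vs - 1"
  unfolding path_edges_conv_zip
  using card_image_le[of "set (zip vs (tl vs))"] card_length[of "zip vs (tl vs)"] le_trans by fastforce

lemma path_edge_subset_set: "e \<in> path_edges vs \<Longrightarrow> e \<subseteq> set vs"
  unfolding path_edges_def by auto

lemma is_vpath_iff:
  "is_vpath V E vs \<longleftrightarrow> vs \<noteq> [] \<and> set vs \<subseteq> V \<and> path_edges vs \<subseteq> E \<and> distinct vs"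
  unfolding is_vpath_def is_walk_def path_edges_def by blast

lemma is_vpathI:
  "vs \<noteq> [] \<Longrightarrow> set vs \<subseteq> V \<Longrightarrow> path_edges vs \<subseteq> E \<Longrightarrow> distinct vs \<Longrightarrow> is_vpath V E vs"
  by (simp add: is_vpath_iff)

lemma
  assumes "is_vpath V E vs"
  shows vpath_not_Nil: "vs \<noteq> []" and vpath_set_subset: "set vs \<subseteq> V"
    and vpath_edges_subset: "path_edges vs \<subseteq> E" and vpath_distinct: "distinct vs"
  using assms by (simp_all add: is_vpath_iff)

lemma vpath_edge: "is_vpath V E vs \<Longrightarrow> Suc i < length vs \<Longrightarrow> {vs ! i, vs ! Suc i} \<in> E"
  unfolding is_vpath_def is_walk_def by blast

lemma vpath_mono: "is_vpath V' E' vs \<Longrightarrow> V' \<subseteq> V \<Longrightarrow> E' \<subseteq> E \<Longrightarrow> is_vpath V E vs"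
  by (auto simp: is_vpath_iff)

lemma path_edge_set_mono:
  "is_path_edge_set V' E' P \<Longrightarrow> V' \<subseteq> V \<Longrightarrow> E' \<subseteq> E \<Longrightarrow> is_path_edge_set V E P"
  unfolding is_path_edge_set_def using vpath_mono by blast

lemma path_edge_set_subset: "is_path_edge_set V E P \<Longrightarrow> P \<subseteq> E"
  unfolding is_path_edge_set_def using vpath_edges_subset by blast

lemma vpath_length_le_card: "is_vpath V E vs \<Longrightarrow> finite V \<Longrightarrow> length vs \<le> card V"
  by (metis card_mono distinct_card vpath_distinct vpath_set_subset)

lemma path_edges_drop_subset: "path_edges (drop j vs) \<subseteq> path_edges vs"
  unfolding path_edges_conv_zip drop_tl[symmetric] drop_zip[symmetric]
  by (intro image_mono set_drop_subset)

lemma vpath_drop: "is_vpath V E vs \<Longrightarrow> j < length vs \<Longrightarrow> is_vpath V E (drop j vs)"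
  unfolding is_vpath_iff using path_edges_drop_subset set_drop_subset by fastforce

lemma vpath_snoc:
  "is_vpath V E vs \<Longrightarrow> z \<in> V \<Longrightarrow> z \<notin> set vs \<Longrightarrow> {last vs, z} \<in> E \<Longrightarrow> is_vpath V E (vs @ [z])"
  by (auto simp: is_vpath_iff path_edges_append)

lemma vpath_Cons:
  "is_vpath V E vs \<Longrightarrow> z \<in> V \<Longrightarrow> z \<notin> set vs \<Longrightarrow> {z, hd vs} \<in> E \<Longrightarrow> is_vpath V E (z # vs)"
  by (auto simp: is_vpath_iff path_edges_Cons)

lemma vpath_singleton: "v \<in> V \<Longrightarrow> is_vpath V E [v]"
  by (simp add: is_vpath_iff)

section \<open>Simple graphs and trees\<close>

lemma simple_graph_edgeE:
  assumes "simple_graph V E" "e \<in> E"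
  obtains u v where "e = {u, v}" "u \<noteq> v" "u \<in> V" "v \<in> V"
  using assms unfolding simple_graph_def by blast

lemma simple_graph_edge_other:
  assumes "simple_graph V E" "e \<in> E" "v \<in> e"
  obtains w where "e = {v, w}" "w \<noteq> v" "w \<in> V"
  using assms by (elim simple_graph_edgeE) auto

lemma simple_graph_edge_subset: "simple_graph V E \<Longrightarrow> e \<in> E \<Longrightarrow> e \<subseteq> V"
  by (auto elim: simple_graph_edgeE)

lemma simple_graph_finite_vertices: "simple_graph V E \<Longrightarrow> finite V"
  unfolding simple_graph_def by blast

lemma simple_graph_finite_edges: "simple_graph V E \<Longrightarrow> finite E"
  by (meson Pow_iff finite_Pow_iff rev_finite_subset simple_graph_edge_subset
      simple_graph_finite_vertices subsetI)

lemma connected_graphE: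
  assumes "connected_graph V E" "u \<in> V" "w \<in> V"
  obtains vs where "is_vpath V E vs" "hd vs = u" "last vs = w"
  using assms unfolding connected_graph_def by blast

lemma connected_closed_subset_eq:
  assumes conn: "connected_graph V E" and "S \<subseteq> V" "s \<in> S"
    and closed: "\<And>e x. e \<in> E \<Longrightarrow> x \<in> e \<Longrightarrow> x \<in> S \<Longrightarrow> e \<subseteq> S"
  shows "S = V"
proof
  show "V \<subseteq> S"
  proof
    fix z assume "z \<in> V"
    then obtain vs where vs: "is_vpath V E vs" "hd vs = s" "last vs = z"
      using connected_graphE[OF conn] \<open>S \<subseteq> V\<close> \<open>s \<in> S\<close> by blast
    have "vs ! i \<in> S" if "i < length vs" for i
      using that
    proof (induction i)
      case 0
      then show ?case using vs(2) \<open>s \<in> S\<close> by (simp add: hd_conv_nth)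
    next
      case (Suc i)
      then show ?case using closed[OF vpath_edge[OF vs(1) Suc.prems], of "vs ! i"] by simp
    qed
    then show "z \<in> S"
      using vs(3) vpath_not_Nil[OF vs(1)] by (metis in_set_conv_nth last_in_set)
  qed
qed fact

lemma vpath_interior_neighbours:
  assumes "is_vpath V E vs" "v \<in> set vs" "v \<noteq> hd vs" "v \<noteq> last vs"
  obtains p q where "p \<noteq> q" "p \<noteq> v" "q \<noteq> v" "{p, v} \<in> path_edges vs" "{v, q} \<in> path_edges vs"
proof -
  have ne: "vs \<noteq> []" and d: "distinct vs" using vpath_not_Nil vpath_distinct assms(1) by auto
  obtain i where i: "i < length vs" "vs ! i = v" using assms(2) by (metis in_set_conv_nth)
  have "i \<noteq> 0" using i assms(3) ne by (metis hd_conv_nth)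
  moreover have "i \<noteq> length vs - 1" using i assms(4) ne by (auto simp: last_conv_nth)
  ultimately have i': "Suc (i - 1) = i" "Suc i < length vs" using i(1) by auto
  have "{vs ! (i - 1), vs ! Suc (i - 1)} \<in> path_edges vs" "{vs ! i, vs ! Suc i} \<in> path_edges vs"
    unfolding path_edges_def using i' by auto
  then have "{vs ! (i - 1), v} \<in> path_edges vs" "{v, vs ! Suc i} \<in> path_edges vs"
    using i'(1) i(2) by simp_all
  moreover have "vs ! (i - 1) \<noteq> vs ! Suc i" "vs ! (i - 1) \<noteq> v" "vs ! Suc i \<noteq> v"
    using i' i(2)[symmetric] by (simp_all add: nth_eq_iff_index_eq[OF d])
  ultimately show ?thesis using that by blast
qed

lemma
  assumes "is_tree V E"
  shows tree_simple_graph: "simple_graph V E" and tree_connected: "connected_graph V E"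
    and tree_acyclic: "\<not> has_cycle V E"
    and tree_finite_vertices: "finite V" and tree_finite_edges: "finite E"
  using assms simple_graph_finite_vertices simple_graph_finite_edges unfolding is_tree_def by auto

text \<open>The last vertex of a longest path is a leaf: a further neighbour would either extend
  the path or close a cycle with it.\<close>
lemma tree_obtain_leaf:
  assumes T: "is_tree V E" and "E \<noteq> {}"
  obtains x y where "x \<in> V" "y \<in> V" "x \<noteq> y" "{x, y} \<in> E" "\<And>e. e \<in> E \<Longrightarrow> y \<in> e \<Longrightarrow> e = {x, y}"
proof -
  have sg: "simple_graph V E" and fin: "finite V" and acyc: "\<not> has_cycle V E"
    using tree_simple_graph[OF T] tree_finite_vertices[OF T] tree_acyclic[OF T] .
  obtain u w where uw: "{u, w} \<in> E" "u \<noteq> w" "u \<in> V" "w \<in> V"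
    using \<open>E \<noteq> {}\<close> sg by (metis all_not_in_conv simple_graph_edgeE)
  have "is_vpath V E [u, w]" using uw by (simp add: is_vpath_iff)
  then obtain vs where vs: "is_vpath V E vs"
    and longest: "\<And>zs. is_vpath V E zs \<Longrightarrow> length zs \<le> length vs"
    using ex_has_greatest_nat[of "is_vpath V E" _ length "Suc (card V)"]
      vpath_length_le_card[OF _ fin] by (metis le_imp_less_Suc)
  define M where "M = length vs"
  have M: "M \<ge> 2" using longest[OF \<open>is_vpath V E [u, w]\<close>] unfolding M_def by simp
  have d: "distinct vs" using vpath_distinct[OF vs] .
  define x y where "x = vs ! (M - 2)" and "y = vs ! (M - 1)"
  have y_last: "y = last vs" using vpath_not_Nil[OF vs] unfolding y_def M_def by (simp add: last_conv_nth)
  have xy: "{x, y} \<in> E" using vpath_edge[OF vs, of "M - 2"] M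
    unfolding x_def y_def M_def by (simp add: Suc_diff_Suc numeral_2_eq_2)
  have "x \<noteq> y" using M d unfolding x_def y_def M_def by (simp add: nth_eq_iff_index_eq)
  have "x \<in> V" "y \<in> V" using vpath_set_subset[OF vs] M unfolding x_def y_def M_def by auto
  have "e = {x, y}" if e: "e \<in> E" "y \<in> e" for e
  proof -
    obtain z where z: "e = {y, z}" "z \<noteq> y" "z \<in> V" using simple_graph_edge_other[OF sg e] .
    have "z \<in> set vs"
    proof (rule ccontr)
      assume "z \<notin> set vs"
      then have "is_vpath V E (vs @ [z])" using vpath_snoc[OF vs z(3)] e z(1) y_last by simp
      then show False using longest by fastforce
    qed
    then obtain j where j: "j < M" "vs ! j = z" unfolding M_def by (metis in_set_conv_nth)
    have "j \<noteq> M - 1" using j z(2) unfolding y_def by auto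
    moreover have "j + 3 \<le> M \<Longrightarrow> has_cycle V E"
      unfolding has_cycle_def using vpath_drop[OF vs, of j] j e z(1) y_last
      by (intro exI[of _ "drop j vs"]) (auto simp: M_def hd_drop_conv_nth insert_commute)
    ultimately have "j = M - 2" using acyc j(1) by linarith
    then show "e = {x, y}" using j z(1) unfolding x_def by auto
  qed
  then show ?thesis using that \<open>x \<in> V\<close> \<open>y \<in> V\<close> \<open>x \<noteq> y\<close> xy by blast
qed

lemma has_cycle_mono: "has_cycle V' E' \<Longrightarrow> V' \<subseteq> V \<Longrightarrow> E' \<subseteq> E \<Longrightarrow> has_cycle V E"
  unfolding has_cycle_def using vpath_mono by blast

lemma cycle_vertex_neighbours:
  assumes vs: "is_vpath V E vs" and len: "length vs \<ge> 3" and closing: "{last vs, hd vs} \<in> E"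
    and "v \<in> set vs"
  obtains p q where "p \<noteq> q" "p \<noteq> v" "q \<noteq> v" "{p, v} \<in> E" "{v, q} \<in> E"
proof -
  have d: "distinct vs" using vpath_distinct[OF vs] .
  define m where "m = length vs - 1"
  have m: "m \<ge> 2" "Suc m = length vs" using len unfolding m_def by auto
  have hd: "hd vs = vs ! 0" and last: "last vs = vs ! m"
    using vpath_not_Nil[OF vs] by (simp_all add: hd_conv_nth last_conv_nth m_def)
  have neq: "vs ! i \<noteq> vs ! j" if "i \<le> m" "j \<le> m" "i \<noteq> j" for i j
    using that m(2) by (simp add: nth_eq_iff_index_eq[OF d])
  consider "v = hd vs" | "v = last vs" | "v \<noteq> hd vs" "v \<noteq> last vs" by blast
  then show ?thesis
  proof cases
    case 1
    then show ?thesis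
      using that[of "vs ! m" "vs ! 1"] closing vpath_edge[OF vs, of 0] neq m unfolding hd last
      by simp
  next
    case 2
    have "Suc (m - 1) = m" using m by simp
    then show ?thesis
      using that[of "vs ! (m - 1)" "vs ! 0"] closing vpath_edge[OF vs, of "m - 1"] neq m
      unfolding 2 hd last by (simp add: insert_commute)
  next
    case 3
    obtain p q where "p \<noteq> q" "p \<noteq> v" "q \<noteq> v" "{p, v} \<in> path_edges vs" "{v, q} \<in> path_edges vs"
      using vpath_interior_neighbours[OF vs \<open>v \<in> set vs\<close> 3] .
    then show ?thesis using that vpath_edges_subset[OF vs] by blast
  qed
qed

lemma connected_graph_delete_leaf:
  assumes conn: "connected_graph V E" and "x \<in> V" "x \<noteq> y"
    and leaf: "\<And>e. e \<in> E \<Longrightarrow> y \<in> e \<Longrightarrow> e = {x, y}"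
  shows "connected_graph (V - {y}) (E - {{x, y}})"
  unfolding connected_graph_def
proof (intro conjI ballI)
  show "V - {y} \<noteq> {}" using \<open>x \<in> V\<close> \<open>x \<noteq> y\<close> by blast
next
  fix a b assume a: "a \<in> V - {y}" and b: "b \<in> V - {y}"
  obtain zs where zs: "is_vpath V E zs" "hd zs = a" "last zs = b"
    using connected_graphE[OF conn] a b by blast
  have "y \<notin> set zs"
  proof
    assume "y \<in> set zs"
    moreover have "y \<noteq> hd zs" "y \<noteq> last zs" using a b zs(2,3) by auto
    ultimately obtain p q
      where "p \<noteq> q" "p \<noteq> y" "q \<noteq> y" "{p, y} \<in> path_edges zs" "{y, q} \<in> path_edges zs"
      by (rule vpath_interior_neighbours[OF zs(1)])
    then have "{p, y} = {x, y}" "{y, q} = {x, y}"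
      using leaf vpath_edges_subset[OF zs(1)] by blast+
    then show False using \<open>p \<noteq> q\<close> \<open>p \<noteq> y\<close> \<open>q \<noteq> y\<close> by (auto simp: doubleton_eq_iff)
  qed
  then have "is_vpath (V - {y}) (E - {{x, y}}) zs"
    using zs(1) path_edge_subset_set unfolding is_vpath_iff by blast
  then show "\<exists>vs. is_vpath (V - {y}) (E - {{x, y}}) vs \<and> hd vs = a \<and> last vs = b"
    using zs by blast
qed

lemma tree_delete_leaf:
  assumes T: "is_tree V E" and "x \<in> V" "x \<noteq> y"
    and leaf: "\<And>e. e \<in> E \<Longrightarrow> y \<in> e \<Longrightarrow> e = {x, y}"
  shows "is_tree (V - {y}) (E - {{x, y}})"
proof -
  have sg: "simple_graph V E" and conn: "connected_graph V E" and acyc: "\<not> has_cycle V E"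
    using T unfolding is_tree_def by auto
  have "simple_graph (V - {y}) (E - {{x, y}})"
    unfolding simple_graph_def
  proof (intro conjI ballI)
    show "finite (V - {y})" using simple_graph_finite_vertices[OF sg] by simp
    fix e assume e: "e \<in> E - {{x, y}}"
    then obtain u v where "e = {u, v}" "u \<noteq> v" "u \<in> V" "v \<in> V"
      using sg by (blast elim: simple_graph_edgeE)
    moreover have "y \<notin> e" using e leaf by blast
    ultimately show "\<exists>u v. e = {u, v} \<and> u \<noteq> v \<and> u \<in> V - {y} \<and> v \<in> V - {y}" by blast
  qed
  moreover have "connected_graph (V - {y}) (E - {{x, y}})"
    using connected_graph_delete_leaf[OF conn assms(2,3) leaf] .
  moreover have "\<not> has_cycle (V - {y}) (E - {{x, y}})"
    using acyc has_cycle_mono[of "V - {y}" "E - {{x, y}}" V E] by blast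
  ultimately show ?thesis unfolding is_tree_def by blast
qed

lemma connected_graph_add_leaf:
  assumes conn: "connected_graph V E" and x: "x \<in> V" and y: "y \<notin> V"
  shows "connected_graph (insert y V) (insert {x, y} E)"
  unfolding connected_graph_def
proof (intro conjI ballI)
  let ?V = "insert y V" and ?E = "insert {x, y} E"
  have lift: "is_vpath ?V ?E vs" if "is_vpath V E vs" for vs
    using vpath_mono[OF that] by blast
  fix a b assume "a \<in> ?V" "b \<in> ?V"
  then consider "a = y" "b = y" | "a = y" "b \<in> V" | "a \<in> V" "b = y" | "a \<in> V" "b \<in> V"
    by blast
  then show "\<exists>vs. is_vpath ?V ?E vs \<and> hd vs = a \<and> last vs = b"
  proof cases
    case 1
    then show ?thesis using vpath_singleton[of y ?V] by fastforce
  next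
    case 2
    then obtain ws where ws: "is_vpath V E ws" "hd ws = x" "last ws = b"
      using connected_graphE[OF conn x] by blast
    then have "is_vpath ?V ?E (y # ws)"
      using vpath_Cons[OF lift[OF ws(1)], of y] vpath_set_subset[OF ws(1)] y
      by (auto simp: insert_commute)
    then show ?thesis using 2 ws vpath_not_Nil[OF ws(1)] by (intro exI[of _ "y # ws"]) simp
  next
    case 3
    then obtain ws where ws: "is_vpath V E ws" "hd ws = a" "last ws = x"
      using connected_graphE[OF conn _ x] by blast
    then have "is_vpath ?V ?E (ws @ [y])"
      using vpath_snoc[OF lift[OF ws(1)], of y] vpath_set_subset[OF ws(1)] y by auto
    then show ?thesis using 3 ws vpath_not_Nil[OF ws(1)] by (intro exI[of _ "ws @ [y]"]) simp
  next
    case 4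
    then show ?thesis using connected_graphE[OF conn] lift by metis
  qed
qed simp

text \<open>A cycle through the new leaf y would need two distinct neighbours of y.\<close>
lemma acyclic_add_leaf:
  assumes "simple_graph V E" "\<not> has_cycle V E" "y \<notin> V"
  shows "\<not> has_cycle (insert y V) (insert {x, y} E)"
proof
  let ?V = "insert y V" and ?E = "insert {x, y} E"
  have E_avoid: "y \<notin> e" if "e \<in> E" for e
    using simple_graph_edge_subset[OF assms(1) that] assms(3) by blast
  assume "has_cycle ?V ?E"
  then obtain cs where cs: "is_vpath ?V ?E cs" "length cs \<ge> 3" "{last cs, hd cs} \<in> ?E"
    unfolding has_cycle_def by blast
  show False
  proof (cases "y \<in> set cs")
    case True
    then obtain p q where "p \<noteq> q" "p \<noteq> y" "q \<noteq> y" "{p, y} \<in> ?E" "{y, q} \<in> ?E"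
      by (rule cycle_vertex_neighbours[OF cs])
    then show False using E_avoid by (auto simp: doubleton_eq_iff)
  next
    case False
    have "last cs \<in> set cs" "hd cs \<in> set cs" using vpath_not_Nil[OF cs(1)] by simp_all
    then have "{last cs, hd cs} \<in> E" using cs(3) False by (auto simp: doubleton_eq_iff)
    moreover have "is_vpath V E cs"
      using cs(1) False path_edge_subset_set unfolding is_vpath_iff by blast
    ultimately show False using assms(2) cs(2) unfolding has_cycle_def by blast
  qed
qed

lemma tree_add_leaf:
  assumes T: "is_tree V E" and x: "x \<in> V" and y: "y \<notin> V"
  shows "is_tree (insert y V) (insert {x, y} E)"
proof -
  have sg: "simple_graph V E" and conn: "connected_graph V E" and acyc: "\<not> has_cycle V E"
    using T unfolding is_tree_def by auto
  have "simple_graph (insert y V) (insert {x, y} E)"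
    unfolding simple_graph_def
  proof (intro conjI ballI)
    show "finite (insert y V)" using simple_graph_finite_vertices[OF sg] by simp
    fix e assume "e \<in> insert {x, y} E"
    then show "\<exists>u v. e = {u, v} \<and> u \<noteq> v \<and> u \<in> insert y V \<and> v \<in> insert y V"
      using sg x y by (blast elim: simple_graph_edgeE)
  qed
  then show ?thesis
    using connected_graph_add_leaf[OF conn x y] acyclic_add_leaf[OF sg acyc y]
    unfolding is_tree_def by blast
qed

lemma tree_remove_leaf:
  assumes "is_tree V E" "E \<noteq> {}"
  obtains V' E' x y
  where "is_tree V' E'" "x \<in> V'" "y \<notin> V'" "V = insert y V'" "E = insert {x, y} E'"
    "card E = Suc (card E')"
proof -
  obtain x y where "x \<in> V" "y \<in> V" "x \<noteq> y" "{x, y} \<in> E" "\<And>e. e \<in> E \<Longrightarrow> y \<in> e \<Longrightarrow> e = {x, y}"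
    using tree_obtain_leaf[OF assms] by metis
  moreover from this have "is_tree (V - {y}) (E - {{x, y}})" by (intro tree_delete_leaf[OF assms(1)])
  moreover have "card E = Suc (card (E - {{x, y}}))"
    using calculation(4) tree_finite_edges[OF assms(1)] by (simp add: card_Suc_Diff1 del: card_Diff_insert)
  ultimately show ?thesis using that[of "V - {y}" "E - {{x, y}}" x y] by blast
qed

lemma tree_without_edges:
  assumes "is_tree V {}"
  shows "card V = 1"
proof -
  have conn: "connected_graph V {}" using assms unfolding is_tree_def by simp
  have "u = w" if uw: "u \<in> V" "w \<in> V" for u w
  proof -
    obtain vs where vs: "is_vpath V {} vs" "hd vs = u" "last vs = w"
      using connected_graphE[OF conn uw] .
    have "length vs \<le> 1" using vpath_edge[OF vs(1), of 0] by (cases "Suc 0 < length vs") auto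
    then obtain a where "vs = [a]" using vpath_not_Nil[OF vs(1)] by (cases vs) auto
    then show "u = w" using vs by simp
  qed
  moreover obtain u where "u \<in> V" using conn unfolding connected_graph_def by blast
  ultimately have "V = {u}" by blast
  then show ?thesis by simp
qed

lemma tree_card_vertices: "is_tree V E \<Longrightarrow> card V = Suc (card E)"
proof (induction "card E" arbitrary: V E)
  case 0
  then have "E = {}" using tree_finite_edges[OF "0.prems"] by simp
  then show ?case using tree_without_edges "0.prems" by simp
next
  case (Suc m)
  then have "E \<noteq> {}" by auto
  then obtain V' E' x y where T': "is_tree V' E'" "x \<in> V'" "y \<notin> V'"
    and "V = insert y V'" "E = insert {x, y} E'" "card E = Suc (card E')"
    by (rule tree_remove_leaf[OF Suc.prems])
  then show ?case using Suc.hyps tree_finite_vertices[OF T'(1)] by simp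
qed

section \<open>The upper bound\<close>

lemma path_edge_set_single_edge:
  "u \<in> V \<Longrightarrow> v \<in> V \<Longrightarrow> u \<noteq> v \<Longrightarrow> {u, v} \<in> E \<Longrightarrow> is_path_edge_set V E {{u, v}}"
  unfolding is_path_edge_set_def by (intro exI[of _ "[u, v]"]) (simp add: is_vpath_iff)

lemma path_edge_set_two_edges:
  assumes "u \<in> V" "v \<in> V" "w \<in> V" "u \<noteq> v" "v \<noteq> w" "u \<noteq> w" "{u, v} \<in> E" "{v, w} \<in> E"
  shows "is_path_edge_set V E {{u, v}, {v, w}}"
  unfolding is_path_edge_set_def using assms by (intro exI[of _ "[u, v, w]"]) (simp add: is_vpath_iff)

lemma path_through_pendant_edges:
  assumes conn: "connected_graph V E" and x: "x \<in> V" and y: "y \<notin> V"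
    and x': "x' \<in> insert y V" and y': "y' \<notin> insert y V"
  obtains P where "is_path_edge_set (insert y' (insert y V)) (insert {x', y'} (insert {x, y} E)) P"
    "{x, y} \<in> P" "{x', y'} \<in> P"
proof (cases "x' = y")
  case True
  have "is_path_edge_set (insert y' (insert y V)) (insert {x', y'} (insert {x, y} E)) {{x, y}, {y, y'}}"
    using True x y y' by (intro path_edge_set_two_edges) auto
  then show ?thesis using that True by blast
next
  case False
  then have "x' \<in> V" using x' by simp
  then obtain ws where ws: "is_vpath V E ws" "hd ws = x" "last ws = x'"
    using connected_graphE[OF conn x] by blast
  have ne: "ws \<noteq> []" and ws_V: "set ws \<subseteq> V"
    using vpath_not_Nil[OF ws(1)] vpath_set_subset[OF ws(1)] .
  have edges: "path_edges (y # ws @ [y']) = insert {y, x} (insert {x', y'} (path_edges ws))"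
    using ne ws(2,3) by (simp add: path_edges_Cons path_edges_append)
  have "is_vpath (insert y' (insert y V)) (insert {x', y'} (insert {x, y} E)) (y # ws @ [y'])"
    using vpath_edges_subset[OF ws(1)] vpath_distinct[OF ws(1)] ws_V x y y'
    unfolding is_vpath_iff edges by (auto simp: insert_commute)
  then have "is_path_edge_set (insert y' (insert y V)) (insert {x', y'} (insert {x, y} E))
      (path_edges (y # ws @ [y']))"
    unfolding is_path_edge_set_def by blast
  moreover have "{x, y} \<in> path_edges (y # ws @ [y'])" "{x', y'} \<in> path_edges (y # ws @ [y'])"
    unfolding edges by (simp_all add: insert_commute)
  ultimately show ?thesis using that by blast
qed

definition covering_separating_path_system :: "'a set \<Rightarrow> 'a set set \<Rightarrow> 'a set set set \<Rightarrow> bool" where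
  "covering_separating_path_system V E \<P> \<longleftrightarrow>
     finite \<P> \<and> separating_path_system V E \<P> \<and> (\<forall>e\<in>E. \<exists>P\<in>\<P>. e \<in> P)"

lemma covering_separating_path_system_empty: "covering_separating_path_system V {} {}"
  unfolding covering_separating_path_system_def separating_path_system_def by simp

lemma separating_path_system_paths_subset:
  "separating_path_system V E \<P> \<Longrightarrow> P \<in> \<P> \<Longrightarrow> P \<subseteq> E"
  unfolding separating_path_system_def using path_edge_set_subset by blast

text \<open>An old edge is separated from a new one by any old path through it, as old paths
  contain no new edges.\<close>
lemma covering_separating_path_system_extend:
  assumes old: "covering_separating_path_system V' E' \<P>" and "V' \<subseteq> V" "E' \<subseteq> E"
    and "finite \<Q>" and paths: "\<And>Q. Q \<in> \<Q> \<Longrightarrow> is_path_edge_set V E Q"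
    and cover: "\<And>e. e \<in> E - E' \<Longrightarrow> \<exists>Q\<in>\<Q>. e \<in> Q"
    and separate: "\<And>e e'. e \<in> E - E' \<Longrightarrow> e' \<in> E - E' \<Longrightarrow> e \<noteq> e' \<Longrightarrow> \<exists>Q\<in>\<Q>. (e \<in> Q) \<noteq> (e' \<in> Q)"
  shows "covering_separating_path_system V E (\<P> \<union> \<Q>)"
proof -
  have fin: "finite \<P>" and old_sep: "separating_path_system V' E' \<P>"
    and old_cover: "\<And>e. e \<in> E' \<Longrightarrow> \<exists>P\<in>\<P>. e \<in> P"
    using old unfolding covering_separating_path_system_def by auto
  have mixed: "\<exists>P\<in>\<P>. (e \<in> P) \<noteq> (e' \<in> P)" if "e \<in> E'" "e' \<notin> E'" for e e'
    using old_cover[OF that(1)] separating_path_system_paths_subset[OF old_sep] that(2) by blast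
  have "separating_path_system V E (\<P> \<union> \<Q>)"
    unfolding separating_path_system_def
  proof (intro conjI ballI impI)
    fix P assume "P \<in> \<P> \<union> \<Q>"
    then show "is_path_edge_set V E P"
      using old_sep paths path_edge_set_mono[OF _ \<open>V' \<subseteq> V\<close> \<open>E' \<subseteq> E\<close>]
      unfolding separating_path_system_def by blast
  next
    fix e e' assume "e \<in> E" "e' \<in> E" "e \<noteq> e'"
    then consider "e \<in> E'" "e' \<in> E'" | "e \<in> E'" "e' \<in> E - E'" | "e \<in> E - E'" "e' \<in> E'"
      | "e \<in> E - E'" "e' \<in> E - E'"
      by blast
    then show "\<exists>P\<in>\<P> \<union> \<Q>. (e \<in> P) \<noteq> (e' \<in> P)"
    proof cases
      case 1
      then show ?thesis using old_sep \<open>e \<noteq> e'\<close> unfolding separating_path_system_def by blast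
    next
      case 2
      then show ?thesis using mixed[of e e'] by blast
    next
      case 3
      then show ?thesis using mixed[of e' e] by blast
    next
      case 4
      then show ?thesis using separate \<open>e \<noteq> e'\<close> by blast
    qed
  qed
  moreover have "\<exists>P\<in>\<P> \<union> \<Q>. e \<in> P" if "e \<in> E" for e
    using that old_cover cover by (cases "e \<in> E'") auto
  ultimately show ?thesis
    using fin \<open>finite \<Q>\<close> unfolding covering_separating_path_system_def by blast
qed

text \<open>The new edge is the only edge on no path, hence separated from all others.\<close>
lemma separating_path_system_insert_uncovered:
  assumes old: "covering_separating_path_system V' E' \<P>" and "V' \<subseteq> V" "d \<notin> E'"
  shows "separating_path_system V (insert d E') \<P>"
proof -
  have old_sep: "separating_path_system V' E' \<P>"
    and old_cover: "\<And>e. e \<in> E' \<Longrightarrow> \<exists>P\<in>\<P>. e \<in> P"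
    using old unfolding covering_separating_path_system_def by auto
  have "d \<notin> P" if "P \<in> \<P>" for P
    using separating_path_system_paths_subset[OF old_sep that] \<open>d \<notin> E'\<close> by blast
  then have "\<exists>P\<in>\<P>. (e \<in> P) \<noteq> (e' \<in> P)" if "e \<in> insert d E'" "e' \<in> insert d E'" "e \<noteq> e'" for e e'
    using that old_cover old_sep unfolding separating_path_system_def by (metis insert_iff)
  moreover have "is_path_edge_set V (insert d E') P" if "P \<in> \<P>" for P
    using old_sep that path_edge_set_mono[OF _ \<open>V' \<subseteq> V\<close> subset_insertI]
    unfolding separating_path_system_def by blast
  ultimately show ?thesis unfolding separating_path_system_def by blast
qed

text \<open>With a, b, c the three new pendant edges, the two new paths are one through a and b
  avoiding c, and one through c and exactly one of a and b.\<close>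
lemma covering_separating_path_system_three_pendant_edges:
  assumes T: "is_tree V E" and old: "covering_separating_path_system V E \<P>"
    and x1: "x1 \<in> V" and y1: "y1 \<notin> V"
    and x2: "x2 \<in> insert y1 V" and y2: "y2 \<notin> insert y1 V"
    and x3: "x3 \<in> insert y2 (insert y1 V)" and y3: "y3 \<notin> insert y2 (insert y1 V)"
  shows "\<exists>\<P>'. covering_separating_path_system (insert y3 (insert y2 (insert y1 V)))
      (insert {x3, y3} (insert {x2, y2} (insert {x1, y1} E))) \<P>' \<and> card \<P>' \<le> card \<P> + 2"
proof -
  define a b c where "a = {x1, y1}" and "b = {x2, y2}" and "c = {x3, y3}"
  let ?V = "insert y3 (insert y2 (insert y1 V))" and ?E = "insert c (insert b (insert a E))"
  have conn: "connected_graph V E" using tree_connected[OF T] .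
  have E_V: "e \<subseteq> V" if "e \<in> E" for e
    using simple_graph_edge_subset[OF tree_simple_graph[OF T] that] .
  have new: "a \<notin> E" "b \<notin> E" "c \<notin> E" "a \<noteq> b" "a \<noteq> c" "b \<noteq> c"
    using E_V x1 y1 x2 y2 x3 y3 unfolding a_def b_def c_def by (auto simp: doubleton_eq_iff)
  obtain A where A: "is_path_edge_set (insert y2 (insert y1 V)) (insert b (insert a E)) A" "a \<in> A" "b \<in> A"
    using path_through_pendant_edges[OF conn x1 y1 x2 y2] unfolding a_def b_def .
  obtain B where B: "is_path_edge_set ?V ?E B" "c \<in> B" "(a \<in> B) \<noteq> (b \<in> B)"
  proof (cases "x3 = y2")
    case True
    have "is_path_edge_set ?V ?E {b, c}"
      unfolding b_def c_def True using x2 y2 y3 by (intro path_edge_set_two_edges) auto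
    then show ?thesis using that new by blast
  next
    case False
    then have "x3 \<in> insert y1 V" using x3 by simp
    moreover have "y3 \<notin> insert y1 V" using y3 by simp
    ultimately obtain B where "is_path_edge_set (insert y3 (insert y1 V)) (insert c (insert a E)) B"
      "a \<in> B" "c \<in> B"
      using path_through_pendant_edges[OF conn x1 y1] unfolding a_def c_def by blast
    moreover from this have "b \<notin> B" using path_edge_set_subset new by blast
    ultimately show ?thesis
      using that path_edge_set_mono[of "insert y3 (insert y1 V)" "insert c (insert a E)" B ?V ?E]
      by blast
  qed
  have "c \<notin> A" using path_edge_set_subset[OF A(1)] new by blast
  have "covering_separating_path_system ?V ?E (\<P> \<union> {A, B})"
  proof (rule covering_separating_path_system_extend[OF old])
    show "is_path_edge_set ?V ?E Q" if "Q \<in> {A, B}" for Q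
      using that A(1) B(1) path_edge_set_mono[of _ _ A ?V ?E] by blast
    show "\<exists>Q\<in>{A, B}. e \<in> Q" if "e \<in> ?E - E" for e
      using that A B by blast
    show "\<exists>Q\<in>{A, B}. (e \<in> Q) \<noteq> (e' \<in> Q)" if "e \<in> ?E - E" "e' \<in> ?E - E" "e \<noteq> e'" for e e'
      using that A(2,3) B(2,3) \<open>c \<notin> A\<close> by blast
  qed auto
  moreover have "card (\<P> \<union> {A, B}) \<le> card \<P> + 2"
    using card_Un_le[of \<P> "{A, B}"] by (cases "A = B") auto
  ultimately show ?thesis unfolding a_def b_def c_def by blast
qed

lemma covering_separating_path_system_insert_pendant_edge:
  assumes "covering_separating_path_system V E \<P>" "x \<in> V" "y \<notin> V"
  shows "covering_separating_path_system (insert y V) (insert {x, y} E) (\<P> \<union> {{{x, y}}})"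
proof (rule covering_separating_path_system_extend[OF assms(1)])
  show "is_path_edge_set (insert y V) (insert {x, y} E) Q" if "Q \<in> {{{x, y}}}" for Q
    using that assms(2,3) by (auto intro: path_edge_set_single_edge)
qed auto

lemma tree_covering_separating_path_system:
  "is_tree V E \<Longrightarrow> card E = 3 * q \<Longrightarrow> \<exists>\<P>. covering_separating_path_system V E \<P> \<and> card \<P> \<le> 2 * q"
proof (induction q arbitrary: V E)
  case 0
  then have "E = {}" using tree_finite_edges[OF "0.prems"(1)] by simp
  then show ?case using covering_separating_path_system_empty by fastforce
next
  case (Suc q)
  have "E \<noteq> {}" using Suc.prems(2) by auto
  then obtain V1 E1 x3 y3 where T1: "is_tree V1 E1" "x3 \<in> V1" "y3 \<notin> V1"
    and V: "V = insert y3 V1" and E: "E = insert {x3, y3} E1" "card E = Suc (card E1)"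
    by (rule tree_remove_leaf[OF Suc.prems(1)])
  have "E1 \<noteq> {}" using Suc.prems(2) E(2) by auto
  then obtain V2 E2 x2 y2 where T2: "is_tree V2 E2" "x2 \<in> V2" "y2 \<notin> V2"
    and V1: "V1 = insert y2 V2" and E1: "E1 = insert {x2, y2} E2" "card E1 = Suc (card E2)"
    by (rule tree_remove_leaf[OF T1(1)])
  have "E2 \<noteq> {}" using Suc.prems(2) E(2) E1(2) by auto
  then obtain V3 E3 x1 y1 where T3: "is_tree V3 E3" "x1 \<in> V3" "y1 \<notin> V3"
    and V2: "V2 = insert y1 V3" and E2: "E2 = insert {x1, y1} E3" "card E2 = Suc (card E3)"
    by (rule tree_remove_leaf[OF T2(1)])
  have "card E3 = 3 * q" using Suc.prems(2) E(2) E1(2) E2(2) by simp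
  then obtain \<P> where \<P>: "covering_separating_path_system V3 E3 \<P>" "card \<P> \<le> 2 * q"
    using Suc.IH[OF T3(1)] by blast
  have "x2 \<in> insert y1 V3" "y2 \<notin> insert y1 V3"
    "x3 \<in> insert y2 (insert y1 V3)" "y3 \<notin> insert y2 (insert y1 V3)"
    using T1(2,3) T2(2,3) V1 V2 by simp_all
  then obtain \<P>' where "covering_separating_path_system V E \<P>'" "card \<P>' \<le> card \<P> + 2"
    using covering_separating_path_system_three_pendant_edges[OF T3(1) \<P>(1) T3(2,3)]
    unfolding V V1 V2 E(1) E1(1) E2(1) by blast
  then show ?case using \<P>(2) by (intro exI[of _ \<P>']) simp
qed

lemma tree_covering_separating_path_system_Suc:
  assumes T: "is_tree V E" and "card E = Suc (3 * q)"
  shows "\<exists>\<P>. covering_separating_path_system V E \<P> \<and> card \<P> \<le> 2 * q + 1"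
proof -
  have "E \<noteq> {}" using assms(2) by auto
  then obtain V' E' x y where T': "is_tree V' E'" "x \<in> V'" "y \<notin> V'" "V = insert y V'"
    and E: "E = insert {x, y} E'" "card E = Suc (card E')"
    by (rule tree_remove_leaf[OF T])
  then obtain \<P> where \<P>: "covering_separating_path_system V' E' \<P>" "card \<P> \<le> 2 * q"
    using tree_covering_separating_path_system[OF T'(1)] assms(2) by auto
  have "card (\<P> \<union> {{{x, y}}}) \<le> card \<P> + 1"
    using card_Un_le[of \<P> "{{{x, y}}}"] by simp
  then show ?thesis
    using covering_separating_path_system_insert_pendant_edge[OF \<P>(1) T'(2,3)] T'(4) E(1) \<P>(2)
    by (intro exI[of _ "\<P> \<union> {{{x, y}}}"]) simp
qed

lemma tree_separating_path_system_of_covering: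
  assumes T: "is_tree V E" and "E \<noteq> {}"
    and covering: "\<And>V' E'. is_tree V' E' \<Longrightarrow> V' \<subseteq> V \<Longrightarrow> card E = Suc (card E') \<Longrightarrow>
      \<exists>\<P>. covering_separating_path_system V' E' \<P> \<and> card \<P> \<le> m"
  obtains \<P> where "finite \<P>" "separating_path_system V E \<P>" "card \<P> \<le> m"
proof -
  obtain V' E' x y where T': "is_tree V' E'" "x \<in> V'" "y \<notin> V'" "V = insert y V'"
    and E: "E = insert {x, y} E'" "card E = Suc (card E')"
    by (rule tree_remove_leaf[OF T \<open>E \<noteq> {}\<close>])
  obtain \<P> where \<P>: "covering_separating_path_system V' E' \<P>" "card \<P> \<le> m"
    using covering[OF T'(1) _ E(2)] T'(4) by blast
  have "{x, y} \<notin> E'"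
    using T'(3) simple_graph_edge_subset[OF tree_simple_graph[OF T'(1)]] by blast
  then have "separating_path_system V E \<P>"
    using separating_path_system_insert_uncovered[OF \<P>(1)] T'(4) E(1) by blast
  then show ?thesis using that \<P> unfolding covering_separating_path_system_def by blast
qed

lemma tree_separating_path_system_card_le:
  assumes T: "is_tree V E"
  obtains \<P> where "finite \<P>" "separating_path_system V E \<P>" "3 * card \<P> \<le> 2 * card E"
proof -
  define k where "k = card E div 3"
  have "card E mod 3 < 3" by simp
  then consider "card E = 3 * k" | "card E = Suc (3 * k)" | "card E = Suc (Suc (3 * k))"
    unfolding k_def by linarith
  then show ?thesis
  proof cases
    case 1
    then obtain \<P> where "covering_separating_path_system V E \<P>" "card \<P> \<le> 2 * k"
      using tree_covering_separating_path_system[OF T] by blast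
    then show ?thesis using that 1 unfolding covering_separating_path_system_def by fastforce
  next
    case 2
    have "E \<noteq> {}" using 2 by auto
    moreover have "\<exists>\<P>. covering_separating_path_system V' E' \<P> \<and> card \<P> \<le> 2 * k"
      if "is_tree V' E'" "V' \<subseteq> V" "card E = Suc (card E')" for V' E'
      using tree_covering_separating_path_system[OF that(1)] that(3) 2 by simp
    ultimately obtain \<P> where "finite \<P>" "separating_path_system V E \<P>" "card \<P> \<le> 2 * k"
      by (rule tree_separating_path_system_of_covering[OF T])
    then show ?thesis using that 2 by simp
  next
    case 3
    have "E \<noteq> {}" using 3 by auto
    moreover have "\<exists>\<P>. covering_separating_path_system V' E' \<P> \<and> card \<P> \<le> 2 * k + 1"
      if "is_tree V' E'" "V' \<subseteq> V" "card E = Suc (card E')" for V' E'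
      using tree_covering_separating_path_system_Suc[OF that(1)] that(3) 3 by simp
    ultimately obtain \<P> where "finite \<P>" "separating_path_system V E \<P>" "card \<P> \<le> 2 * k + 1"
      by (rule tree_separating_path_system_of_covering[OF T])
    then show ?thesis using that 3 by simp
  qed
qed

lemma f_sep_le: "finite \<P> \<Longrightarrow> separating_path_system V E \<P> \<Longrightarrow> f_sep V E \<le> card \<P>"
  unfolding f_sep_def by (rule Least_le) blast

lemma tree_f_sep_le:
  assumes "is_tree V E"
  shows "3 * f_sep V E \<le> 2 * card E"
proof -
  obtain \<P> where "finite \<P>" "separating_path_system V E \<P>" "3 * card \<P> \<le> 2 * card E"
    using tree_separating_path_system_card_le[OF assms] .
  then show ?thesis using f_sep_le[of \<P> V E] by linarith
qed

lemma tree_obtain_optimal_separating_path_system: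
  assumes "is_tree V E"
  obtains \<P> where "finite \<P>" "separating_path_system V E \<P>" "card \<P> = f_sep V E"
proof -
  obtain \<P> where "finite \<P>" "separating_path_system V E \<P>"
    using tree_separating_path_system_card_le[OF assms] .
  have "\<exists>\<Q>. finite \<Q> \<and> card \<Q> = f_sep V E \<and> separating_path_system V E \<Q>"
    unfolding f_sep_def
    by (rule LeastI_ex) (use \<open>finite \<P>\<close> \<open>separating_path_system V E \<P>\<close> in blast)
  then obtain \<Q> where "finite \<Q>" "card \<Q> = f_sep V E" "separating_path_system V E \<Q>"
    by blast
  then show ?thesis by (intro that)
qed

section \<open>The lower bound\<close>

lemma sum_card_filter_swap:
  assumes "finite A" "finite B"
  shows "(\<Sum>a\<in>A. card {b\<in>B. R a b}) = (\<Sum>b\<in>B. card {a\<in>A. R a b})"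
proof -
  have "(\<Sum>a\<in>A. card {b\<in>B. R a b}) = (\<Sum>a\<in>A. \<Sum>b\<in>B. of_bool (R a b))"
    using assms by (simp add: Int_def)
  also have "\<dots> = (\<Sum>b\<in>B. \<Sum>a\<in>A. of_bool (R a b))" by (rule sum.swap)
  also have "\<dots> = (\<Sum>b\<in>B. card {a\<in>A. R a b})" using assms by (simp add: Int_def)
  finally show ?thesis .
qed

definition degree :: "'a set set \<Rightarrow> 'a \<Rightarrow> nat" where
  "degree E v = card {e\<in>E. v \<in> e}"

definition paths_through :: "'a set set set \<Rightarrow> 'a set \<Rightarrow> 'a set set set" where
  "paths_through \<P> e = {P\<in>\<P>. e \<in> P}"

text \<open>The number of paths ending in v: v is an end of a path exactly if it lies on a single edge
  of it.\<close>
definition path_ends_at :: "'a set set set \<Rightarrow> 'a \<Rightarrow> nat" where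
  "path_ends_at \<P> v = card {P\<in>\<P>. card {e\<in>P. v \<in> e} = 1}"

lemma sum_degree: "simple_graph V E \<Longrightarrow> (\<Sum>v\<in>V. degree E v) = 2 * card E"
proof -
  assume sg: "simple_graph V E"
  have "card {v\<in>V. v \<in> e} = 2" if "e \<in> E" for e
  proof -
    obtain u w where "e = {u, w}" "u \<noteq> w" "u \<in> V" "w \<in> V"
      using sg \<open>e \<in> E\<close> by (rule simple_graph_edgeE)
    then have "{v\<in>V. v \<in> e} = {u, w}" by auto
    then show ?thesis using \<open>u \<noteq> w\<close> by simp
  qed
  then show ?thesis
    unfolding degree_def
    using sum_card_filter_swap[OF simple_graph_finite_vertices[OF sg] simple_graph_finite_edges[OF sg],
        of "\<lambda>v e. v \<in> e"]
    by simp
qed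

lemma path_edge_set_card_ends_le:
  assumes "is_path_edge_set V E P"
  shows "card {v\<in>V. card {e\<in>P. v \<in> e} = 1} \<le> 2"
proof -
  obtain vs where vs: "is_vpath V E vs" "P = path_edges vs"
    using assms unfolding is_path_edge_set_def by blast
  have "v \<in> {hd vs, last vs}" if "card {e\<in>P. v \<in> e} = 1" for v
  proof (rule ccontr)
    assume v: "v \<notin> {hd vs, last vs}"
    obtain e where "{e\<in>P. v \<in> e} = {e}" using \<open>card {e\<in>P. v \<in> e} = 1\<close> by (rule card_1_singletonE)
    then have "v \<in> set vs" using path_edge_subset_set vs(2) by blast
    then obtain p q where "p \<noteq> q" "p \<noteq> v" "q \<noteq> v" "{p, v} \<in> P" "{v, q} \<in> P"
      using vpath_interior_neighbours[OF vs(1)] v vs(2) by blast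
    then have "{{p, v}, {v, q}} \<subseteq> {e\<in>P. v \<in> e}" "card {{p, v}, {v, q}} = 2"
      by (auto simp: doubleton_eq_iff)
    moreover have "finite {e\<in>P. v \<in> e}" using vs(2) by simp
    ultimately have "2 \<le> card {e\<in>P. v \<in> e}" by (metis card_mono)
    then show False using \<open>card {e\<in>P. v \<in> e} = 1\<close> by simp
  qed
  then have "card {v\<in>V. card {e\<in>P. v \<in> e} = 1} \<le> card {hd vs, last vs}"
    by (intro card_mono) auto
  also have "\<dots> \<le> 2" by (simp add: card_insert_le_m1)
  finally show ?thesis .
qed

lemma sum_path_ends_at_le:
  assumes "finite V" "finite \<P>" "\<And>P. P \<in> \<P> \<Longrightarrow> is_path_edge_set V E P"
  shows "(\<Sum>v\<in>V. path_ends_at \<P> v) \<le> 2 * card \<P>"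
proof -
  have "(\<Sum>v\<in>V. path_ends_at \<P> v) = (\<Sum>P\<in>\<P>. card {v\<in>V. card {e\<in>P. v \<in> e} = 1})"
    unfolding path_ends_at_def using sum_card_filter_swap[OF assms(1,2)] .
  also have "\<dots> \<le> (\<Sum>P\<in>\<P>. 2)"
    by (rule sum_mono) (rule path_edge_set_card_ends_le[OF assms(3)])
  finally show ?thesis by simp
qed

lemma paths_through_inj:
  "separating_path_system V E \<P> \<Longrightarrow> e \<in> E \<Longrightarrow> e' \<in> E \<Longrightarrow> paths_through \<P> e = paths_through \<P> e' \<Longrightarrow> e = e'"
  unfolding separating_path_system_def paths_through_def by blast

text \<open>Edges lying on exactly one path are determined by that path.\<close>
lemma card_single_path_edges_le:
  assumes "finite \<P>" "separating_path_system V E \<P>" "F \<subseteq> E"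
    and single: "\<And>e. e \<in> F \<Longrightarrow> card (paths_through \<P> e) = 1"
  shows "card F \<le> card \<P>"
proof -
  have "inj_on (paths_through \<P>) F"
    by (rule inj_onI) (use paths_through_inj[OF assms(2)] assms(3) in blast)
  then have "card F = card (paths_through \<P> ` F)" by (simp add: card_image)
  also have "\<dots> \<le> card ((\<lambda>P. {P}) ` \<P>)"
  proof (rule card_mono)
    show "finite ((\<lambda>P. {P}) ` \<P>)" using assms(1) by simp
    show "paths_through \<P> ` F \<subseteq> (\<lambda>P. {P}) ` \<P>"
    proof
      fix A assume "A \<in> paths_through \<P> ` F"
      then obtain e where "e \<in> F" "A = paths_through \<P> e" by blast
      then obtain P where "A = {P}" using single by (metis card_1_singletonE)
      moreover have "A \<subseteq> \<P>" using \<open>A = paths_through \<P> e\<close> unfolding paths_through_def by blast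
      ultimately show "A \<in> (\<lambda>P. {P}) ` \<P>" by blast
    qed
  qed
  also have "\<dots> \<le> card \<P>" using card_image_le[OF assms(1)] .
  finally show ?thesis .
qed

lemma tree_sum_three_minus_degree:
  assumes "is_tree V E"
  shows "(\<Sum>v\<in>V. 3 - int (degree E v)) = int (card V) + 2"
proof -
  have "(\<Sum>v\<in>V. 3 - int (degree E v)) = 3 * int (card V) - int (\<Sum>v\<in>V. degree E v)"
    by (simp add: sum_subtractf)
  also have "\<dots> = int (card V) + 2"
    using sum_degree[OF tree_simple_graph[OF assms]] tree_card_vertices[OF assms] by simp
  finally show ?thesis .
qed

lemma path_ends_at_eq_card_paths_through:
  assumes paths: "\<And>P. P \<in> \<P> \<Longrightarrow> P \<subseteq> E" and "f \<in> E" "v \<in> f"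
    and at_v: "{e\<in>E. v \<in> e} \<subseteq> insert f Z" and unused: "\<And>P. P \<in> \<P> \<Longrightarrow> P \<inter> Z = {}"
  shows "path_ends_at \<P> v = card (paths_through \<P> f)"
proof -
  have "{e\<in>P. v \<in> e} = (if f \<in> P then {f} else {})" if "P \<in> \<P>" for P
    using paths[OF that] unused[OF that] at_v \<open>v \<in> f\<close> by auto
  then have "{P\<in>\<P>. card {e\<in>P. v \<in> e} = 1} = paths_through \<P> f"
    unfolding paths_through_def by (auto split: if_splits)
  then show ?thesis unfolding path_ends_at_def by simp
qed

text \<open>A path separating two edges at v and avoiding all others at v ends in v.\<close>
lemma path_ends_at_pos:
  assumes "finite \<P>" and sep: "separating_path_system V E \<P>"
    and "f \<in> E" "g \<in> E" "f \<noteq> g" "v \<in> f" "v \<in> g"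
    and at_v: "{e\<in>E. v \<in> e} \<subseteq> {f, g} \<union> Z" and unused: "\<And>P. P \<in> \<P> \<Longrightarrow> P \<inter> Z = {}"
  shows "1 \<le> path_ends_at \<P> v"
proof -
  obtain P where P: "P \<in> \<P>" "(f \<in> P) \<noteq> (g \<in> P)"
    using sep assms(3-5) unfolding separating_path_system_def by blast
  have "{e\<in>P. v \<in> e} = {f, g} \<inter> P"
    using separating_path_system_paths_subset[OF sep P(1)] unused[OF P(1)] at_v assms(6,7) by blast
  then have "card {e\<in>P. v \<in> e} = 1" using P(2) by (cases "f \<in> P") auto
  then have "P \<in> {P\<in>\<P>. card {e\<in>P. v \<in> e} = 1}" using P(1) by blast
  then show ?thesis
    unfolding path_ends_at_def using \<open>finite \<P>\<close> by (auto simp: Suc_le_eq card_gt_0_iff)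
qed

locale separated_tree =
  fixes V :: "'a set" and E :: "'a set set" and \<P> :: "'a set set set"
  assumes tree: "is_tree V E" and card_ge_4: "card V \<ge> 4"
    and finite_paths: "finite \<P>" and separating: "separating_path_system V E \<P>"
begin

lemma paths_subset: "P \<in> \<P> \<Longrightarrow> P \<subseteq> E"
  using separating_path_system_paths_subset[OF separating] .

lemma finite_edges_at: "finite {e\<in>E. v \<in> e}"
  using tree_finite_edges[OF tree] by simp

text \<open>Since the tree is connected, a set of at most three vertices closed under incident edges
  would be all of V.\<close>
lemma no_small_closed_subset:
  assumes "S \<subseteq> V" "S \<noteq> {}" "card S \<le> 3"
    and closed: "\<And>e x. e \<in> E \<Longrightarrow> x \<in> e \<Longrightarrow> x \<in> S \<Longrightarrow> e \<subseteq> S"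
  shows False
proof -
  obtain s where "s \<in> S" using assms(2) by blast
  then have "S = V" by (rule connected_closed_subset_eq[OF tree_connected[OF tree] assms(1) _ closed])
  then show False using assms(3) card_ge_4 by simp
qed

lemma degree_pos: "v \<in> V \<Longrightarrow> 1 \<le> degree E v"
  using no_small_closed_subset[of "{v}"] finite_edges_at[of v]
  unfolding degree_def by (fastforce simp: Suc_le_eq card_gt_0_iff)

definition leaf_edge :: "'a \<Rightarrow> 'a set" where
  "leaf_edge v = the_elem {e\<in>E. v \<in> e}"

lemma edges_at_leaf: "degree E v = 1 \<Longrightarrow> {e\<in>E. v \<in> e} = {leaf_edge v}"
  unfolding degree_def leaf_edge_def by (erule card_1_singletonE) simp

lemma leaf_edge: "degree E v = 1 \<Longrightarrow> leaf_edge v \<in> E \<and> v \<in> leaf_edge v"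
  using edges_at_leaf by blast

lemma leaf_edge_inj:
  assumes "v \<in> V" "w \<in> V" "degree E v = 1" "degree E w = 1" "leaf_edge v = leaf_edge w"
  shows "v = w"
proof (rule ccontr)
  assume "v \<noteq> w"
  obtain w' where "leaf_edge v = {v, w'}"
    using leaf_edge[OF assms(3)] by (auto elim: simple_graph_edge_other[OF tree_simple_graph[OF tree]])
  moreover have "w \<in> leaf_edge v" using leaf_edge[OF assms(4)] assms(5) by simp
  ultimately have vw: "leaf_edge v = {v, w}" using \<open>v \<noteq> w\<close> by auto
  have "e = leaf_edge v" if "e \<in> E" "x \<in> e" "x \<in> {v, w}" for e x
    using that edges_at_leaf[OF assms(3)] edges_at_leaf[OF assms(4)] unfolding assms(5) by blast
  then show False
    by (intro no_small_closed_subset[of "{v, w}"]) (use assms(1,2) vw in \<open>auto simp: card_insert_le_m1\<close>)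
qed

lemma path_ends_at_leaf:
  assumes "degree E v = 1"
  shows "path_ends_at \<P> v = card (paths_through \<P> (leaf_edge v))"
  by (rule path_ends_at_eq_card_paths_through[of \<P> E "leaf_edge v" v "{}"])
    (use paths_subset leaf_edge[OF assms] edges_at_leaf[OF assms] in auto)

lemma path_ends_at_degree_two:
  assumes "degree E v = 2"
  shows "1 \<le> path_ends_at \<P> v"
proof -
  obtain f g where "{e\<in>E. v \<in> e} = {f, g}" "f \<noteq> g"
    using assms unfolding degree_def by (meson card_2_iff)
  then show ?thesis
    by (intro path_ends_at_pos[OF finite_paths separating, where Z = "{}"]) auto
qed

lemma card_le_card_paths:
  assumes "inj_on ed S" and single: "\<And>v. v \<in> S \<Longrightarrow> ed v \<in> E \<and> card (paths_through \<P> (ed v)) = 1"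
  shows "card S \<le> card \<P>"
proof -
  have "card (ed ` S) \<le> card \<P>"
    using single by (intro card_single_path_edges_le[OF finite_paths separating]) auto
  then show ?thesis using card_image[OF assms(1)] by simp
qed

lemma card_vertices_le_local_bound:
  assumes "S \<subseteq> V" "card S \<le> card \<P>"
    and local: "\<And>v. v \<in> V \<Longrightarrow> 3 - int (degree E v) \<le> int (path_ends_at \<P> v) + of_bool (v \<in> S) + d v"
  shows "int (card V) + 2 \<le> 3 * int (card \<P>) + (\<Sum>v\<in>V. d v)"
proof -
  have fin: "finite V" using tree_finite_vertices[OF tree] .
  have "int (card V) + 2 = (\<Sum>v\<in>V. 3 - int (degree E v))"
    using tree_sum_three_minus_degree[OF tree] by simp
  also have "\<dots> \<le> (\<Sum>v\<in>V. int (path_ends_at \<P> v) + of_bool (v \<in> S) + d v)"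
    using local by (rule sum_mono)
  also have "\<dots> = int (\<Sum>v\<in>V. path_ends_at \<P> v) + int (card S) + (\<Sum>v\<in>V. d v)"
    using fin \<open>S \<subseteq> V\<close> by (simp add: sum.distrib Int_absorb1)
  also have "\<dots> \<le> 3 * int (card \<P>) + (\<Sum>v\<in>V. d v)"
  proof -
    have "(\<Sum>v\<in>V. path_ends_at \<P> v) \<le> 2 * card \<P>"
      using sum_path_ends_at_le[OF fin finite_paths] separating
      unfolding separating_path_system_def by blast
    then show ?thesis using \<open>card S \<le> card \<P>\<close> by linarith
  qed
  finally show ?thesis .
qed

definition single_path_leaves :: "'a set" where
  "single_path_leaves = {v\<in>V. degree E v = 1 \<and> path_ends_at \<P> v = 1}"

lemma single_path_leaves_subset: "single_path_leaves \<subseteq> V"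
  unfolding single_path_leaves_def by blast

lemma single_path_leaf_edge:
  "v \<in> single_path_leaves \<Longrightarrow> leaf_edge v \<in> E \<and> card (paths_through \<P> (leaf_edge v)) = 1"
  using leaf_edge path_ends_at_leaf unfolding single_path_leaves_def by auto

lemma inj_on_leaf_edge_single_path_leaves: "inj_on leaf_edge single_path_leaves"
  using leaf_edge_inj unfolding single_path_leaves_def by (auto intro: inj_onI)

lemma card_single_path_leaves_le: "card single_path_leaves \<le> card \<P>"
  using card_le_card_paths[OF inj_on_leaf_edge_single_path_leaves single_path_leaf_edge] .

lemma local_bound_leaf:
  assumes "v \<in> V" "degree E v = 1" "path_ends_at \<P> v \<noteq> 0"
  shows "2 \<le> int (path_ends_at \<P> v) + of_bool (v \<in> single_path_leaves)"
  using assms unfolding single_path_leaves_def by (cases "path_ends_at \<P> v = 1") auto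

lemma card_vertices_le_if_leaf_edges_covered:
  assumes covered: "\<And>v. v \<in> V \<Longrightarrow> degree E v = 1 \<Longrightarrow> path_ends_at \<P> v \<noteq> 0"
  shows "card V + 2 \<le> 3 * card \<P>"
proof -
  have "3 - int (degree E v) \<le> int (path_ends_at \<P> v) + of_bool (v \<in> single_path_leaves) + 0"
    if v: "v \<in> V" for v
  proof -
    consider "degree E v = 1" | "degree E v = 2" | "degree E v \<ge> 3"
      using degree_pos[OF v] by linarith
    then show ?thesis
    proof cases
      case 1
      then show ?thesis using local_bound_leaf[OF v 1 covered[OF v 1]] by simp
    next
      case 2
      then show ?thesis using path_ends_at_degree_two by force
    qed simp
  qed
  then have "int (card V) + 2 \<le> 3 * int (card \<P>) + (\<Sum>v\<in>V. 0)"
    by (rule card_vertices_le_local_bound[OF single_path_leaves_subset card_single_path_leaves_le])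
  then show ?thesis by simp
qed

context
  fixes v0 u :: 'a
  assumes uncovered_leaf: "v0 \<in> V" "degree E v0 = 1" "path_ends_at \<P> v0 = 0"
    and leaf_edge_v0: "leaf_edge v0 = {v0, u}"
begin

lemma neighbour: "u \<in> V" "u \<noteq> v0"
  using leaf_edge[OF uncovered_leaf(2)] simple_graph_edge_subset[OF tree_simple_graph[OF tree]]
    simple_graph_edge_other[OF tree_simple_graph[OF tree]] leaf_edge_v0
  by (metis doubleton_eq_iff)+

lemma leaf_edge_v0_unused: "paths_through \<P> (leaf_edge v0) = {}"
  using path_ends_at_leaf[OF uncovered_leaf(2)] uncovered_leaf(3) finite_paths
  unfolding paths_through_def by simp

lemma uncovered_leaf_unique:
  assumes "w \<in> V" "degree E w = 1" "path_ends_at \<P> w = 0"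
  shows "w = v0"
proof -
  have "paths_through \<P> (leaf_edge w) = {}"
    using path_ends_at_leaf[OF assms(2)] assms(3) finite_paths by (simp add: paths_through_def)
  then have "paths_through \<P> (leaf_edge w) = paths_through \<P> (leaf_edge v0)"
    using leaf_edge_v0_unused by simp
  then have "leaf_edge w = leaf_edge v0"
    using paths_through_inj[OF separating] leaf_edge assms(2) uncovered_leaf(2) by blast
  then show ?thesis using leaf_edge_inj assms(1,2) uncovered_leaf(1,2) by blast
qed

lemma degree_neighbour: "2 \<le> degree E u"
proof (rule ccontr)
  assume "\<not> 2 \<le> degree E u"
  then have "degree E u = 1" using degree_pos[OF neighbour(1)] by simp
  then have "leaf_edge u = leaf_edge v0"
    using edges_at_leaf leaf_edge[OF uncovered_leaf(2)] leaf_edge_v0 by blast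
  then show False
    using leaf_edge_inj[OF neighbour(1) uncovered_leaf(1) \<open>degree E u = 1\<close> uncovered_leaf(2)]
      neighbour(2) by blast
qed

lemma path_ends_at_neighbour: "degree E u \<le> 3 \<Longrightarrow> 1 \<le> path_ends_at \<P> u"
proof -
  assume "degree E u \<le> 3"
  then consider "degree E u = 2" | "degree E u = 3" using degree_neighbour by linarith
  then show ?thesis
  proof cases
    case 1
    then show ?thesis by (rule path_ends_at_degree_two)
  next
    case 2
    have "leaf_edge v0 \<in> {e\<in>E. u \<in> e}" using leaf_edge[OF uncovered_leaf(2)] leaf_edge_v0 by simp
    then have "card ({e\<in>E. u \<in> e} - {leaf_edge v0}) = 2"
      using 2 finite_edges_at unfolding degree_def by simp
    then obtain f g where fg: "{e\<in>E. u \<in> e} - {leaf_edge v0} = {f, g}" "f \<noteq> g"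
      by (meson card_2_iff)
    have "P \<inter> {leaf_edge v0} = {}" if "P \<in> \<P>" for P
      using leaf_edge_v0_unused that unfolding paths_through_def by blast
    then show ?thesis
      by (intro path_ends_at_pos[OF finite_paths separating, where f = f and g = g and Z = "{leaf_edge v0}"])
        (use fg in blast)+
  qed
qed

text \<open>A leaf w at the other end of f would make v0, u, w a component.\<close>
lemma leaf_edge_ne_other_edge_at_neighbour:
  assumes edges_u: "{e\<in>E. u \<in> e} = {leaf_edge v0, f}" and w: "w \<in> V" "degree E w = 1" "w \<noteq> u"
  shows "leaf_edge w \<noteq> f"
proof
  assume wf: "leaf_edge w = f"
  have "f \<in> E" "u \<in> f" using edges_u by auto
  then obtain x where "f = {u, x}"
    by (auto elim: simple_graph_edge_other[OF tree_simple_graph[OF tree]])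
  then have fw: "f = {u, w}" using leaf_edge[OF w(2)] wf \<open>w \<noteq> u\<close> by auto
  have "e \<subseteq> {v0, u, w}" if e: "e \<in> E" "y \<in> e" and y: "y \<in> {v0, u, w}" for e y
  proof -
    from y consider "y = v0" | "y = u" | "y = w" by blast
    then have "e = leaf_edge v0 \<or> e = f"
    proof cases
      case 1
      then show ?thesis using e edges_at_leaf[OF uncovered_leaf(2)] by blast
    next
      case 2
      then show ?thesis using e edges_u by blast
    next
      case 3
      then show ?thesis using e edges_at_leaf[OF w(2)] wf by blast
    qed
    then show ?thesis using leaf_edge_v0 fw by blast
  qed
  then show False
    by (intro no_small_closed_subset[of "{v0, u, w}"])
      (use uncovered_leaf(1) neighbour(1) w(1) in \<open>auto simp: card_insert_le_m1\<close>)
qed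

lemma card_insert_neighbour_single_path_leaves_le:
  assumes "degree E u = 2" "path_ends_at \<P> u = 1"
  shows "card (insert u single_path_leaves) \<le> card \<P>"
proof -
  have e0: "leaf_edge v0 \<in> {e\<in>E. u \<in> e}" using leaf_edge[OF uncovered_leaf(2)] leaf_edge_v0 by simp
  then have "card ({e\<in>E. u \<in> e} - {leaf_edge v0}) = 1"
    using assms(1) finite_edges_at unfolding degree_def by simp
  then obtain f where f: "{e\<in>E. u \<in> e} - {leaf_edge v0} = {f}" by (rule card_1_singletonE)
  then have edges_u: "{e\<in>E. u \<in> e} = {leaf_edge v0, f}" using e0 by blast
  have "path_ends_at \<P> u = card (paths_through \<P> f)"
    by (rule path_ends_at_eq_card_paths_through[of \<P> E f u "{leaf_edge v0}"])
      (use paths_subset f leaf_edge_v0_unused in \<open>auto simp: paths_through_def\<close>)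
  then have f_single: "f \<in> E \<and> card (paths_through \<P> f) = 1" using f assms(2) by auto
  have u_not_leaf: "u \<notin> single_path_leaves" using assms(1) unfolding single_path_leaves_def by auto
  have f_not_leaf_edge: "leaf_edge w \<noteq> f" if "w \<in> single_path_leaves" for w
    using leaf_edge_ne_other_edge_at_neighbour[OF edges_u] that u_not_leaf
    unfolding single_path_leaves_def by blast
  show ?thesis
  proof (rule card_le_card_paths[where ed = "\<lambda>v. if v = u then f else leaf_edge v"])
    show "inj_on (\<lambda>v. if v = u then f else leaf_edge v) (insert u single_path_leaves)"
    proof (rule inj_onI)
      fix v w assume "v \<in> insert u single_path_leaves" "w \<in> insert u single_path_leaves"
        and "(if v = u then f else leaf_edge v) = (if w = u then f else leaf_edge w)"
      then show "v = w"
        using inj_on_leaf_edge_single_path_leaves f_not_leaf_edge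
        by (cases "v = u"; cases "w = u") (auto dest: inj_onD)
    qed
    show "(if v = u then f else leaf_edge v) \<in> E \<and>
        card (paths_through \<P> (if v = u then f else leaf_edge v)) = 1"
      if "v \<in> insert u single_path_leaves" for v
      using that f_single single_path_leaf_edge by auto
  qed
qed

text \<open>Compared with the bound for covered leaf edges, v0 loses 2 and u gains 1.\<close>
lemma card_vertices_le_if_leaf_edge_uncovered: "card V + 1 \<le> 3 * card \<P>"
proof -
  define S where "S = (if degree E u = 2 \<and> path_ends_at \<P> u = 1
    then insert u single_path_leaves else single_path_leaves)"
  define d where "d v = (if v = v0 then 2 else 0) - (if v = u then 1 else 0 :: int)" for v
  have "S \<subseteq> V" using single_path_leaves_subset neighbour(1) unfolding S_def by auto
  moreover have "card S \<le> card \<P>"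
    using card_insert_neighbour_single_path_leaves_le card_single_path_leaves_le unfolding S_def by auto
  moreover have "3 - int (degree E v) \<le> int (path_ends_at \<P> v) + of_bool (v \<in> S) + d v"
    if v: "v \<in> V" for v
  proof (cases "v = v0 \<or> v = u")
    case True
    have "u \<notin> single_path_leaves" using degree_neighbour unfolding single_path_leaves_def by auto
    then show ?thesis
      using True uncovered_leaf(2) neighbour(2) path_ends_at_neighbour degree_neighbour
      unfolding d_def S_def by (cases "degree E u \<le> 3") auto
  next
    case False
    consider "degree E v = 1" | "degree E v = 2" | "degree E v \<ge> 3"
      using degree_pos[OF v] by linarith
    then show ?thesis
    proof cases
      case 1
      then have "path_ends_at \<P> v \<noteq> 0" using uncovered_leaf_unique[OF v] False by blast
      then show ?thesis
        using local_bound_leaf[OF v 1] 1 False unfolding d_def S_def by auto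
    next
      case 2
      then show ?thesis using path_ends_at_degree_two[OF 2] False unfolding d_def by simp
    qed (use False in \<open>simp add: d_def\<close>)
  qed
  ultimately have "int (card V) + 2 \<le> 3 * int (card \<P>) + (\<Sum>v\<in>V. d v)"
    by (rule card_vertices_le_local_bound)
  moreover have "(\<Sum>v\<in>V. d v) = 1"
    using uncovered_leaf(1) neighbour tree_finite_vertices[OF tree]
    unfolding d_def by (simp add: sum_subtractf)
  ultimately show ?thesis by simp
qed

end

lemma card_vertices_le: "card V + 1 \<le> 3 * card \<P>"
proof (cases "\<exists>v0\<in>V. degree E v0 = 1 \<and> path_ends_at \<P> v0 = 0")
  case True
  then obtain v0 where v0: "v0 \<in> V" "degree E v0 = 1" "path_ends_at \<P> v0 = 0" by blast
  moreover obtain u where "leaf_edge v0 = {v0, u}"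
    using leaf_edge[OF v0(2)] by (auto elim: simple_graph_edge_other[OF tree_simple_graph[OF tree]])
  ultimately show ?thesis by (rule card_vertices_le_if_leaf_edge_uncovered)
next
  case False
  then show ?thesis using card_vertices_le_if_leaf_edges_covered by force
qed

end

lemma tree_f_sep_ge:
  assumes "is_tree V E" "card V \<ge> 4"
  shows "card V + 1 \<le> 3 * f_sep V E"
proof -
  obtain \<P> where "finite \<P>" "separating_path_system V E \<P>" "card \<P> = f_sep V E"
    using tree_obtain_optimal_separating_path_system[OF assms(1)] .
  then interpret separated_tree V E \<P> using assms by unfold_locales
  show ?thesis using card_vertices_le \<open>card \<P> = f_sep V E\<close> by simp
qed

section \<open>Stars and caterpillars\<close>

text \<open>At most one edge lies on no path and the edges lying on exactly one path are at most as many
  as the paths, while every other edge is counted at least twice in the total length.\<close>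
lemma separating_path_system_card_edges_le:
  assumes "finite E" "finite \<P>" and sep: "separating_path_system V E \<P>"
  shows "2 * card E \<le> (\<Sum>P\<in>\<P>. card P) + card \<P> + 2"
proof -
  define S Z where "S = {e\<in>E. card (paths_through \<P> e) = 1}"
    and "Z = {e\<in>E. paths_through \<P> e = {}}"
  have "(\<Sum>e\<in>E. card (paths_through \<P> e)) = (\<Sum>P\<in>\<P>. card {e\<in>E. e \<in> P})"
    unfolding paths_through_def using sum_card_filter_swap[OF assms(1,2)] .
  also have "\<dots> = (\<Sum>P\<in>\<P>. card P)"
  proof (rule sum.cong)
    show "card {e\<in>E. e \<in> P} = card P" if "P \<in> \<P>" for P
      using separating_path_system_paths_subset[OF sep that]
      by (metis Collect_mem_eq inf.absorb_iff2 Collect_conj_eq)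
  qed simp
  finally have total: "(\<Sum>e\<in>E. card (paths_through \<P> e)) = (\<Sum>P\<in>\<P>. card P)" .
  have "card S \<le> card \<P>" unfolding S_def by (rule card_single_path_edges_le[OF assms(2) sep]) auto
  moreover have "card Z \<le> Suc 0"
    using paths_through_inj[OF sep] assms(1) unfolding Z_def by (subst card_le_Suc0_iff_eq) auto
  moreover have "2 * card E \<le> (\<Sum>e\<in>E. card (paths_through \<P> e) + of_bool (e \<in> S) + 2 * of_bool (e \<in> Z))"
  proof -
    have "2 \<le> card (paths_through \<P> e) + of_bool (e \<in> S) + 2 * of_bool (e \<in> Z)" if "e \<in> E" for e
    proof -
      have "finite (paths_through \<P> e)" using assms(2) unfolding paths_through_def by simp
      then have "paths_through \<P> e = {} \<or> card (paths_through \<P> e) = 1 \<or> 2 \<le> card (paths_through \<P> e)"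
        using card_0_eq by fastforce
      then show ?thesis using that unfolding S_def Z_def by auto
    qed
    then have "(\<Sum>e\<in>E. 2) \<le> (\<Sum>e\<in>E. card (paths_through \<P> e) + of_bool (e \<in> S) + 2 * of_bool (e \<in> Z))"
      by (rule sum_mono)
    then show ?thesis by simp
  qed
  moreover have "(\<Sum>e\<in>E. card (paths_through \<P> e) + of_bool (e \<in> S) + 2 * of_bool (e \<in> Z))
      = (\<Sum>P\<in>\<P>. card P) + card S + 2 * card Z"
    using assms(1) total unfolding S_def Z_def
    by (simp add: sum.distrib sum_distrib_left[symmetric] Int_def)
  ultimately show ?thesis by linarith
qed

lemma tree_singleton: "is_tree {a} {}"
proof -
  have "connected_graph {a} {}"
    unfolding connected_graph_def using vpath_singleton[of a "{a}" "{}"] by fastforce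
  moreover have "\<not> has_cycle {a} {}"
    unfolding has_cycle_def using vpath_length_le_card[of "{a}" "{}"] by fastforce
  ultimately show ?thesis unfolding is_tree_def simple_graph_def by simp
qed

definition star_vertices :: "nat \<Rightarrow> nat set" where
  "star_vertices m = {..m}"

definition star_edges :: "nat \<Rightarrow> nat set set" where
  "star_edges m = (\<lambda>i. {0, i}) ` {1..m}"

lemma tree_star: "is_tree (star_vertices m) (star_edges m)"
proof (induction m)
  case 0
  then show ?case using tree_singleton unfolding star_vertices_def star_edges_def by simp
next
  case (Suc m)
  have "star_vertices (Suc m) = insert (Suc m) (star_vertices m)"
    "star_edges (Suc m) = insert {0, Suc m} (star_edges m)"
    unfolding star_vertices_def star_edges_def by (auto simp: atLeastAtMostSuc_conv)
  then show ?case using tree_add_leaf[OF Suc.IH, of 0 "Suc m"] unfolding star_vertices_def by simp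
qed

lemma card_star_vertices: "card (star_vertices m) = Suc m"
  unfolding star_vertices_def by simp

lemma card_star_edges: "card (star_edges m) = m"
  unfolding star_edges_def by (subst card_image) (auto simp: inj_on_def doubleton_eq_iff)

text \<open>All edges of a star share the centre, so a path has at most two of them.\<close>
lemma star_path_card_le:
  assumes "is_path_edge_set (star_vertices m) (star_edges m) P"
  shows "card P \<le> 2"
proof -
  obtain vs where vs: "is_vpath (star_vertices m) (star_edges m) vs" "P = path_edges vs"
    using assms unfolding is_path_edge_set_def by blast
  have "length vs \<le> 3"
  proof (rule ccontr)
    assume "\<not> length vs \<le> 3"
    then have "{vs ! 0, vs ! 1} \<in> star_edges m" "{vs ! 2, vs ! 3} \<in> star_edges m"
      using vpath_edge[OF vs(1), of 0] vpath_edge[OF vs(1), of 2] by simp_all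
    then have centre: "0 \<in> {vs ! 0, vs ! 1}" "0 \<in> {vs ! 2, vs ! 3}"
      unfolding star_edges_def by blast+
    have neq: "vs ! i \<noteq> vs ! j" if "i < 4" "j < 4" "i \<noteq> j" for i j
      using that \<open>\<not> length vs \<le> 3\<close> nth_eq_iff_index_eq[OF vpath_distinct[OF vs(1)], of i j] by simp
    have "vs ! 0 \<noteq> vs ! 2" "vs ! 0 \<noteq> vs ! 3" "vs ! 1 \<noteq> vs ! 2" "vs ! 1 \<noteq> vs ! 3"
      by (simp_all add: neq)
    then show False using centre by auto
  qed
  then show ?thesis using card_path_edges_le[of vs] vs(2) by simp
qed

lemma star_f_sep_ge: "2 * m \<le> 3 * f_sep (star_vertices m) (star_edges m) + 2"
proof -
  obtain \<P> where \<P>: "finite \<P>" "separating_path_system (star_vertices m) (star_edges m) \<P>"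
    "card \<P> = f_sep (star_vertices m) (star_edges m)"
    using tree_obtain_optimal_separating_path_system[OF tree_star] .
  have "(\<Sum>P\<in>\<P>. card P) \<le> (\<Sum>P\<in>\<P>. 2)"
    using \<P>(2) star_path_card_le unfolding separating_path_system_def by (intro sum_mono) blast
  then show ?thesis
    using separating_path_system_card_edges_le[OF tree_finite_edges[OF tree_star] \<P>(1,2)] \<P>(3)
    by (simp add: card_star_edges)
qed

text \<open>The caterpillar of size r has the spine 0 - 2 - 4 - ... - 4r (edges spine_edge j, j < 2r) and
  a leg 4i - 4i+1 at every other spine vertex (edges leg_edge i, i \<le> r); it has 3r + 2 vertices.
  For i < r the path Q_i runs from the leg 4i+1 (no leg for i = 0) along at most three spine edges,
  and the long path runs from 2 to 4r and then into the last leg. Only leg_edge 0 lies on no path.\<close>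

definition spine_edge :: "nat \<Rightarrow> nat set" where
  "spine_edge j = {2 * j, 2 * j + 2}"

definition leg_edge :: "nat \<Rightarrow> nat set" where
  "leg_edge i = {4 * i, 4 * i + 1}"

lemma spine_edge_eq_iff [simp]: "spine_edge j = spine_edge j' \<longleftrightarrow> j = j'"
  unfolding spine_edge_def by (auto simp: doubleton_eq_iff)

lemma leg_edge_eq_iff [simp]: "leg_edge i = leg_edge i' \<longleftrightarrow> i = i'"
  unfolding leg_edge_def by (auto simp: doubleton_eq_iff)

lemma spine_edge_neq_leg_edge [simp]: "spine_edge j \<noteq> leg_edge i" "leg_edge i \<noteq> spine_edge j"
proof -
  have "4 * i + 1 \<noteq> 2 * j" "4 * i + 1 \<noteq> 2 * j + 2" by presburger+
  then have "4 * i + 1 \<notin> spine_edge j" unfolding spine_edge_def by simp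
  then show "spine_edge j \<noteq> leg_edge i" "leg_edge i \<noteq> spine_edge j" unfolding leg_edge_def by auto
qed

definition caterpillar_vertices :: "nat \<Rightarrow> nat set" where
  "caterpillar_vertices r = {v. v \<le> 4 * r + 1 \<and> v mod 4 \<noteq> 3}"

definition caterpillar_edges :: "nat \<Rightarrow> nat set set" where
  "caterpillar_edges r = spine_edge ` {..<2 * r} \<union> leg_edge ` {..r}"

lemma caterpillar_vertices_Suc:
  "caterpillar_vertices (Suc r) = insert (4 * r + 5) (insert (4 * r + 4) (insert (4 * r + 2) (caterpillar_vertices r)))"
  unfolding caterpillar_vertices_def by (auto; presburger)

lemma caterpillar_edges_Suc:
  "caterpillar_edges (Suc r) =
    insert {4 * r + 4, 4 * r + 5} (insert {4 * r + 2, 4 * r + 4} (insert {4 * r, 4 * r + 2} (caterpillar_edges r)))"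
proof -
  have "{..<2 * Suc r} = insert (2 * r + 1) (insert (2 * r) {..<2 * r})" by auto
  moreover have "spine_edge (2 * r + 1) = {4 * r + 2, 4 * r + 4}" "spine_edge (2 * r) = {4 * r, 4 * r + 2}"
    "leg_edge (Suc r) = {4 * r + 4, 4 * r + 5}"
    unfolding spine_edge_def leg_edge_def by auto
  ultimately show ?thesis unfolding caterpillar_edges_def by (auto simp: atMost_Suc)
qed

lemma tree_caterpillar: "is_tree (caterpillar_vertices r) (caterpillar_edges r)"
proof (induction r)
  case 0
  have "caterpillar_vertices 0 = insert 1 {0}" "caterpillar_edges 0 = insert {0, 1} {}"
    unfolding caterpillar_vertices_def caterpillar_edges_def leg_edge_def by auto
  then show ?case by (simp only:) (rule tree_add_leaf[OF tree_singleton]; simp)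
next
  case (Suc r)
  let ?V = "caterpillar_vertices r" and ?E = "caterpillar_edges r"
  have "4 * r \<in> ?V" "4 * r + 2 \<notin> ?V" "4 * r + 4 \<notin> ?V" "4 * r + 5 \<notin> ?V"
    unfolding caterpillar_vertices_def by auto
  then have "is_tree (insert (4 * r + 2) ?V) (insert {4 * r, 4 * r + 2} ?E)"
    by (intro tree_add_leaf[OF Suc.IH])
  then have "is_tree (insert (4 * r + 4) (insert (4 * r + 2) ?V))
      (insert {4 * r + 2, 4 * r + 4} (insert {4 * r, 4 * r + 2} ?E))"
    by (rule tree_add_leaf) (use \<open>4 * r + 4 \<notin> ?V\<close> in auto)
  then show ?case
    unfolding caterpillar_vertices_Suc caterpillar_edges_Suc
    by (rule tree_add_leaf) (use \<open>4 * r + 5 \<notin> ?V\<close> in auto)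
qed

lemma card_caterpillar_vertices: "card (caterpillar_vertices r) = 3 * r + 2"
proof (induction r)
  case 0
  have "caterpillar_vertices 0 = {0, 1}" unfolding caterpillar_vertices_def by auto
  then show ?case by simp
next
  case (Suc r)
  have "finite (caterpillar_vertices r)" unfolding caterpillar_vertices_def by simp
  moreover have "4 * r + 2 \<notin> caterpillar_vertices r" "4 * r + 4 \<notin> caterpillar_vertices r"
    "4 * r + 5 \<notin> caterpillar_vertices r"
    unfolding caterpillar_vertices_def by auto
  ultimately show ?case unfolding caterpillar_vertices_Suc using Suc.IH by simp
qed

definition spine_path :: "nat \<Rightarrow> nat \<Rightarrow> nat list" where
  "spine_path a b = map (\<lambda>j. 2 * j) [a..<Suc b]"

lemma spine_path_not_Nil: "a \<le> b \<Longrightarrow> spine_path a b \<noteq> []"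
  unfolding spine_path_def by simp

lemma set_spine_path: "set (spine_path a b) = (\<lambda>j. 2 * j) ` {a..b}"
  unfolding spine_path_def by auto

lemma hd_spine_path: "a \<le> b \<Longrightarrow> hd (spine_path a b) = 2 * a"
  unfolding spine_path_def by (simp add: hd_map upt_rec)

lemma last_spine_path: "a \<le> b \<Longrightarrow> last (spine_path a b) = 2 * b"
  unfolding spine_path_def by (simp add: last_map)

lemma path_edges_spine_path: "path_edges (spine_path a b) = spine_edge ` {a..<b}"
proof -
  have len: "length (spine_path a b) = Suc b - a" and nth: "i < Suc b - a \<Longrightarrow> spine_path a b ! i = 2 * (a + i)"
    for i unfolding spine_path_def by (simp_all del: upt_Suc)
  have "{spine_path a b ! i, spine_path a b ! Suc i} = spine_edge (a + i)" if "Suc i < Suc b - a" for i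
    using that nth[of i] nth[of "Suc i"] unfolding spine_edge_def by simp
  then have "path_edges (spine_path a b) = (\<lambda>i. spine_edge (a + i)) ` {i. Suc i < Suc b - a}"
    unfolding path_edges_def len by auto
  also have "(\<lambda>i. a + i) ` {i. Suc i < Suc b - a} = {a..<b}"
  proof
    show "{a..<b} \<subseteq> (\<lambda>i. a + i) ` {i. Suc i < Suc b - a}"
    proof
      fix j assume "j \<in> {a..<b}"
      then have "j = a + (j - a)" "Suc (j - a) < Suc b - a" by auto
      then show "j \<in> (\<lambda>i. a + i) ` {i. Suc i < Suc b - a}" by blast
    qed
  qed auto
  then have "(\<lambda>i. spine_edge (a + i)) ` {i. Suc i < Suc b - a} = spine_edge ` {a..<b}"
    by (metis image_image)
  finally show ?thesis .
qed

lemma leg_vertex_notin_spine_path: "4 * i + 1 \<notin> set (spine_path a b)"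
  unfolding set_spine_path by auto presburger

lemma vpath_spine_path:
  assumes "a \<le> b" "b \<le> 2 * r"
  shows "is_vpath (caterpillar_vertices r) (caterpillar_edges r) (spine_path a b)"
proof (rule is_vpathI)
  show "spine_path a b \<noteq> []" using assms(1) by (rule spine_path_not_Nil)
  show "set (spine_path a b) \<subseteq> caterpillar_vertices r"
    using assms unfolding set_spine_path caterpillar_vertices_def by auto presburger
  show "path_edges (spine_path a b) \<subseteq> caterpillar_edges r"
    unfolding path_edges_spine_path caterpillar_edges_def using assms by auto
  show "distinct (spine_path a b)" unfolding spine_path_def by (simp add: distinct_map inj_on_def)
qed

definition caterpillar_path :: "nat \<Rightarrow> nat \<Rightarrow> nat list" where
  "caterpillar_path r i = (if i = 0 then spine_path 0 (min 3 (2 * r))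
     else (4 * i + 1) # spine_path (2 * i) (min (2 * i + 3) (2 * r)))"

definition caterpillar_long_path :: "nat \<Rightarrow> nat list" where
  "caterpillar_long_path r = spine_path 1 (2 * r) @ [4 * r + 1]"

definition caterpillar_paths :: "nat \<Rightarrow> nat set set set" where
  "caterpillar_paths r =
     insert (path_edges (caterpillar_long_path r)) ((\<lambda>i. path_edges (caterpillar_path r i)) ` {..<r})"

lemma path_edges_caterpillar_path:
  assumes "i < r"
  shows "path_edges (caterpillar_path r i) =
    (if i = 0 then {} else {leg_edge i}) \<union> spine_edge ` {2 * i..<min (2 * i + 3) (2 * r)}"
proof (cases "i = 0")
  case True
  then show ?thesis unfolding caterpillar_path_def by (simp add: path_edges_spine_path)
next
  case False
  let ?s = "spine_path (2 * i) (min (2 * i + 3) (2 * r))"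
  have "{4 * i + 1, hd ?s} = leg_edge i" using assms by (simp add: hd_spine_path leg_edge_def insert_commute)
  then show ?thesis
    using assms False spine_path_not_Nil[of "2 * i" "min (2 * i + 3) (2 * r)"]
    unfolding caterpillar_path_def by (simp add: path_edges_Cons path_edges_spine_path)
qed

lemma path_edges_caterpillar_long_path:
  assumes "1 \<le> r"
  shows "path_edges (caterpillar_long_path r) = insert (leg_edge r) (spine_edge ` {1..<2 * r})"
  using assms spine_path_not_Nil[of 1 "2 * r"] last_spine_path[of 1 "2 * r"]
  unfolding caterpillar_long_path_def by (simp add: path_edges_append path_edges_spine_path leg_edge_def)

lemma vpath_caterpillar_path:
  assumes "i < r"
  shows "is_vpath (caterpillar_vertices r) (caterpillar_edges r) (caterpillar_path r i)"
proof (cases "i = 0")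
  case True
  then show ?thesis unfolding caterpillar_path_def using vpath_spine_path[of 0 "min 3 (2 * r)" r] by simp
next
  case False
  let ?s = "spine_path (2 * i) (min (2 * i + 3) (2 * r))"
  have "{4 * i + 1, hd ?s} = leg_edge i" using assms by (simp add: hd_spine_path leg_edge_def insert_commute)
  then have "{4 * i + 1, hd ?s} \<in> caterpillar_edges r" unfolding caterpillar_edges_def using assms by auto
  moreover have "4 * i + 1 \<in> caterpillar_vertices r" using assms unfolding caterpillar_vertices_def by auto
  ultimately show ?thesis
    using vpath_Cons[OF vpath_spine_path _ leg_vertex_notin_spine_path] assms False
    unfolding caterpillar_path_def by simp
qed

lemma vpath_caterpillar_long_path:
  assumes "1 \<le> r"
  shows "is_vpath (caterpillar_vertices r) (caterpillar_edges r) (caterpillar_long_path r)"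
proof -
  have "{last (spine_path 1 (2 * r)), 4 * r + 1} = leg_edge r"
    using assms by (simp add: last_spine_path leg_edge_def)
  then have "{last (spine_path 1 (2 * r)), 4 * r + 1} \<in> caterpillar_edges r"
    unfolding caterpillar_edges_def by auto
  moreover have "4 * r + 1 \<in> caterpillar_vertices r" unfolding caterpillar_vertices_def by auto
  ultimately show ?thesis
    using vpath_snoc[OF vpath_spine_path _ leg_vertex_notin_spine_path] assms
    unfolding caterpillar_long_path_def by simp
qed

lemma
  assumes "i < r"
  shows spine_edge_in_caterpillar_path_iff:
      "spine_edge j \<in> path_edges (caterpillar_path r i) \<longleftrightarrow> 2 * i \<le> j \<and> j < min (2 * i + 3) (2 * r)"
    and leg_edge_in_caterpillar_path_iff:
      "leg_edge k \<in> path_edges (caterpillar_path r i) \<longleftrightarrow> i \<noteq> 0 \<and> k = i"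
  using assms by (auto simp: path_edges_caterpillar_path)

lemma
  assumes "1 \<le> r"
  shows spine_edge_in_caterpillar_long_path_iff:
      "spine_edge j \<in> path_edges (caterpillar_long_path r) \<longleftrightarrow> 1 \<le> j \<and> j < 2 * r"
    and leg_edge_in_caterpillar_long_path_iff:
      "leg_edge k \<in> path_edges (caterpillar_long_path r) \<longleftrightarrow> k = r"
  using assms by (auto simp: path_edges_caterpillar_long_path)

lemma caterpillar_path_in_caterpillar_paths: "i < r \<Longrightarrow> path_edges (caterpillar_path r i) \<in> caterpillar_paths r"
  and caterpillar_long_path_in_caterpillar_paths: "path_edges (caterpillar_long_path r) \<in> caterpillar_paths r"
  unfolding caterpillar_paths_def by simp_all

lemma caterpillar_paths_separate_spine_edges:
  assumes r: "1 \<le> r" and "j < j'" "j' < 2 * r"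
  shows "\<exists>P\<in>caterpillar_paths r. (spine_edge j \<in> P) \<noteq> (spine_edge j' \<in> P)"
proof -
  define i where "i = j' div 2"
  have i: "2 * i \<le> j'" "j' < 2 * i + 2" "i < r" using assms unfolding i_def by linarith+
  consider "j = 0" | "0 < j" "j < 2 * i" | "0 < i" "j = 2 * i" "j' = 2 * i + 1" using assms i by linarith
  then show ?thesis
  proof cases
    case 1
    then show ?thesis
      using assms by (intro bexI[OF _ caterpillar_long_path_in_caterpillar_paths])
        (simp add: spine_edge_in_caterpillar_long_path_iff)
  next
    case 2
    then show ?thesis
      using assms i by (intro bexI[OF _ caterpillar_path_in_caterpillar_paths[OF i(3)]])
        (simp add: spine_edge_in_caterpillar_path_iff)
  next
    case 3
    then have "i - 1 < r" using i by simp
    then show ?thesis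
      using 3 assms by (intro bexI[OF _ caterpillar_path_in_caterpillar_paths[OF \<open>i - 1 < r\<close>]])
        (auto simp: spine_edge_in_caterpillar_path_iff)
  qed
qed

lemma caterpillar_paths_separate_spine_leg:
  assumes r: "1 \<le> r" and "j < 2 * r" "k \<le> r"
  shows "\<exists>P\<in>caterpillar_paths r. (spine_edge j \<in> P) \<noteq> (leg_edge k \<in> P)"
proof -
  define i where "i = j div 2"
  have i: "2 * i \<le> j" "j < 2 * i + 2" "i < r" using assms unfolding i_def by linarith+
  consider "j = 0" | "0 < j" "k \<noteq> r" | "k = r" using assms by linarith
  then show ?thesis
  proof cases
    case 1
    have "0 < r" using r by simp
    then show ?thesis
      using 1 r by (intro bexI[OF _ caterpillar_path_in_caterpillar_paths[OF \<open>0 < r\<close>]])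
        (simp add: spine_edge_in_caterpillar_path_iff leg_edge_in_caterpillar_path_iff)
  next
    case 2
    then show ?thesis
      using assms by (intro bexI[OF _ caterpillar_long_path_in_caterpillar_paths])
        (simp add: spine_edge_in_caterpillar_long_path_iff leg_edge_in_caterpillar_long_path_iff)
  next
    case 3
    then show ?thesis
      using assms i by (intro bexI[OF _ caterpillar_path_in_caterpillar_paths[OF i(3)]])
        (simp add: spine_edge_in_caterpillar_path_iff leg_edge_in_caterpillar_path_iff)
  qed
qed

lemma caterpillar_paths_separate_legs:
  assumes r: "1 \<le> r" and "k < k'" "k' \<le> r"
  shows "\<exists>P\<in>caterpillar_paths r. (leg_edge k \<in> P) \<noteq> (leg_edge k' \<in> P)"
proof (cases "k' = r")
  case True
  then show ?thesis
    using assms by (intro bexI[OF _ caterpillar_long_path_in_caterpillar_paths])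
      (simp add: leg_edge_in_caterpillar_long_path_iff)
next
  case False
  then have "k' < r" using assms by simp
  then show ?thesis
    using assms by (intro bexI[OF _ caterpillar_path_in_caterpillar_paths[OF \<open>k' < r\<close>]])
      (simp add: leg_edge_in_caterpillar_path_iff)
qed

lemma caterpillar_edgesE:
  assumes "e \<in> caterpillar_edges r"
  obtains (spine) j where "e = spine_edge j" "j < 2 * r" | (leg) k where "e = leg_edge k" "k \<le> r"
  using assms unfolding caterpillar_edges_def by blast

lemma caterpillar_paths_separate:
  assumes r: "1 \<le> r" and e: "e \<in> caterpillar_edges r" and e': "e' \<in> caterpillar_edges r"
    and "e \<noteq> e'"
  shows "\<exists>P\<in>caterpillar_paths r. (e \<in> P) \<noteq> (e' \<in> P)"
proof -
  let ?sep = "\<lambda>x y. \<exists>P\<in>caterpillar_paths r. (x \<in> P) \<noteq> (y \<in> P)"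
  have sym: "?sep x y \<Longrightarrow> ?sep y x" for x y by blast
  from e show ?thesis
  proof (cases rule: caterpillar_edgesE)
    case e_spine: (spine j)
    from e' show ?thesis
    proof (cases rule: caterpillar_edgesE)
      case (spine j')
      then consider "j < j'" | "j' < j" using \<open>e \<noteq> e'\<close> e_spine by fastforce
      then show ?thesis
      proof cases
        case 1
        then show ?thesis using caterpillar_paths_separate_spine_edges[OF r 1] spine e_spine by simp
      next
        case 2
        then show ?thesis
          using sym[OF caterpillar_paths_separate_spine_edges[OF r 2]] spine e_spine by simp
      qed
    next
      case (leg k)
      then show ?thesis using caterpillar_paths_separate_spine_leg[OF r] e_spine by simp
    qed
  next
    case e_leg: (leg k)
    from e' show ?thesis
    proof (cases rule: caterpillar_edgesE)
      case (spine j)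
      then show ?thesis using sym[OF caterpillar_paths_separate_spine_leg[OF r]] e_leg by simp
    next
      case (leg k')
      then consider "k < k'" | "k' < k" using \<open>e \<noteq> e'\<close> e_leg by fastforce
      then show ?thesis
      proof cases
        case 1
        then show ?thesis using caterpillar_paths_separate_legs[OF r 1] leg e_leg by simp
      next
        case 2
        then show ?thesis using sym[OF caterpillar_paths_separate_legs[OF r 2]] leg e_leg by simp
      qed
    qed
  qed
qed

lemma separating_caterpillar_paths:
  assumes r: "1 \<le> r"
  shows "separating_path_system (caterpillar_vertices r) (caterpillar_edges r) (caterpillar_paths r)"
  unfolding separating_path_system_def
proof (intro conjI ballI impI)
  fix P assume "P \<in> caterpillar_paths r"
  then consider "P = path_edges (caterpillar_long_path r)"
    | i where "i < r" "P = path_edges (caterpillar_path r i)"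
    unfolding caterpillar_paths_def by blast
  then show "is_path_edge_set (caterpillar_vertices r) (caterpillar_edges r) P"
  proof cases
    case 1
    then show ?thesis unfolding is_path_edge_set_def using vpath_caterpillar_long_path[OF r] by blast
  next
    case (2 i)
    then show ?thesis unfolding is_path_edge_set_def using vpath_caterpillar_path[OF 2(1)] by blast
  qed
qed (rule caterpillar_paths_separate[OF r])

lemma card_caterpillar_paths_le: "card (caterpillar_paths r) \<le> r + 1"
proof -
  have "card ((\<lambda>i. path_edges (caterpillar_path r i)) ` {..<r}) \<le> r"
    using card_image_le[of "{..<r}" "\<lambda>i. path_edges (caterpillar_path r i)"] by simp
  then show ?thesis unfolding caterpillar_paths_def using card_insert_le_m1 by (simp add: card_insert_if)
qed

lemma finite_caterpillar_paths: "finite (caterpillar_paths r)"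
  unfolding caterpillar_paths_def by simp

lemma tree_f_sep_ceiling_floor_bounds:
  assumes "is_tree V E" "card V \<ge> 4"
  shows "\<lceil>(real (card V) + 1) / 3\<rceil> \<le> int (f_sep V E)"
    and "int (f_sep V E) \<le> \<lfloor>2 * (real (card V) - 1) / 3\<rfloor>"
proof -
  have "card V + 1 \<le> 3 * f_sep V E" "3 * f_sep V E + 2 \<le> 2 * card V"
    using tree_f_sep_ge[OF assms] tree_f_sep_le[OF assms(1)] tree_card_vertices[OF assms(1)] by simp_all
  then show "\<lceil>(real (card V) + 1) / 3\<rceil> \<le> int (f_sep V E)"
    and "int (f_sep V E) \<le> \<lfloor>2 * (real (card V) - 1) / 3\<rfloor>"
    by (simp_all add: ceiling_le_iff le_floor_iff)
qed

lemma caterpillar_f_sep_eq_ceiling: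
  assumes "1 \<le> r"
  shows "int (f_sep (caterpillar_vertices r) (caterpillar_edges r))
    = \<lceil>(real (card (caterpillar_vertices r)) + 1) / 3\<rceil>"
proof -
  have "f_sep (caterpillar_vertices r) (caterpillar_edges r) \<le> card (caterpillar_paths r)"
    by (rule f_sep_le[OF finite_caterpillar_paths separating_caterpillar_paths[OF assms]])
  also have "\<dots> \<le> r + 1" by (rule card_caterpillar_paths_le)
  finally have upper: "f_sep (caterpillar_vertices r) (caterpillar_edges r) \<le> r + 1" .
  have "card (caterpillar_vertices r) \<ge> 4" using assms by (simp add: card_caterpillar_vertices)
  from tree_f_sep_ge[OF tree_caterpillar this]
  have "3 * r + 3 \<le> 3 * f_sep (caterpillar_vertices r) (caterpillar_edges r)"
    by (simp add: card_caterpillar_vertices)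
  then have "f_sep (caterpillar_vertices r) (caterpillar_edges r) = r + 1" using upper by linarith
  moreover have "(real (card (caterpillar_vertices r)) + 1) / 3 = real (r + 1)"
    by (simp add: card_caterpillar_vertices)
  ultimately show ?thesis by (metis ceiling_of_nat)
qed

lemma star_f_sep_eq_floor:
  assumes "3 \<le> m"
  shows "int (f_sep (star_vertices m) (star_edges m)) = \<lfloor>2 * (real (card (star_vertices m)) - 1) / 3\<rfloor>"
proof -
  have "3 * real (f_sep (star_vertices m) (star_edges m)) \<le> 2 * real m"
    "2 * real m < 3 * real (f_sep (star_vertices m) (star_edges m)) + 3"
    using tree_f_sep_le[OF tree_star[of m]] star_f_sep_ge[of m] unfolding card_star_edges by linarith+
  then show ?thesis by (intro floor_unique[symmetric]) (simp_all add: card_star_vertices)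
qed

theorem theorem1p6:
  shows "(\<forall>(V::'a set) E. is_tree V E \<and> card V \<ge> 4 \<longrightarrow>
            \<lceil>(real (card V) + 1) / 3\<rceil> \<le> int (f_sep V E) \<and>
            int (f_sep V E) \<le> \<lfloor>2 * (real (card V) - 1) / 3\<rfloor>)
       \<and> (\<forall>N. \<exists>(V::nat set) E. is_tree V E \<and> card V \<ge> 4 \<and> card V \<ge> N \<and>
            int (f_sep V E) = \<lceil>(real (card V) + 1) / 3\<rceil>)
       \<and> (\<forall>N. \<exists>(V::nat set) E. is_tree V E \<and> card V \<ge> 4 \<and> card V \<ge> N \<and>
            int (f_sep V E) = \<lfloor>2 * (real (card V) - 1) / 3\<rfloor>)"
proof (intro conjI allI impI)
  fix V :: "'a set" and E
  assume "is_tree V E \<and> card V \<ge> 4"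
  then show "\<lceil>(real (card V) + 1) / 3\<rceil> \<le> int (f_sep V E)"
    and "int (f_sep V E) \<le> \<lfloor>2 * (real (card V) - 1) / 3\<rfloor>"
    using tree_f_sep_ceiling_floor_bounds by blast+
next
  fix N :: nat
  show "\<exists>(V::nat set) E. is_tree V E \<and> card V \<ge> 4 \<and> card V \<ge> N \<and>
      int (f_sep V E) = \<lceil>(real (card V) + 1) / 3\<rceil>"
    by (intro exI[of _ "caterpillar_vertices (max 1 N)"] exI[of _ "caterpillar_edges (max 1 N)"]
        conjI tree_caterpillar caterpillar_f_sep_eq_ceiling) (simp_all add: card_caterpillar_vertices)
next
  fix N :: nat
  show "\<exists>(V::nat set) E. is_tree V E \<and> card V \<ge> 4 \<and> card V \<ge> N \<and>
      int (f_sep V E) = \<lfloor>2 * (real (card V) - 1) / 3\<rfloor>"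
    by (intro exI[of _ "star_vertices (max 3 N)"] exI[of _ "star_edges (max 3 N)"]
        conjI tree_star star_f_sep_eq_floor) (simp_all add: card_star_vertices)
qed

end
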